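(* Let $S'\in\mathcal{L_D}$. A join-semilattice $S$ is equimorphic to $S'$ (as join-semilattices) if and only if there exist two chains $C_1=(X_1,\leq_1)$, $C_2=(X_2,\leq_2)$ and a one-to-one join-preserving map of $S$ into $C_1\times C_2$ whose image $T$ satisfies: (1) the first projection $A_1$ of $T$ has order type $\omega$; (2) the second projection $A_2$ of $T$ is not order-scattered; (3) the set $(\{x\}\times A_2)\cap T$ is finite for every $x\in A_1$.
   Context: A bichain is $B=(X,\leq_1,\leq_2)$ with $\leq_1,\leq_2$ linear orders on $X$; $C(B)$ is the closure system on $X$ whose closed sets are the sets $I_1\cap I_2$ with $I_k$ an initial segment of $(X,\leq_k)$, and $K(C(B))$ is the join-semilattice of its compact elements (closures of finite sets). $\mathcal{L_D}$ is the class of join-semilattices isomorphic to $K(C(B))$ for a bichain $B$ with $(X,\leq_1)$ of order type $\omega$ and $(X,\leq_2)$ not order-scattered. A poset is order-scattered if it contains no copy of $\mathbb{Q}$. Products of chains carry the componentwise order. Two join-semilattices are equimorphic if each embeds into the other by a one-to-one join-preserving map. *)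

theory Defs
  imports Main "HOL-Library.Countable_Set"
begin

definition poset_on :: "'a set \<Rightarrow> ('a \<times> 'a) set \<Rightarrow> bool" where
  "poset_on A r \<longleftrightarrow> r \<subseteq> A \<times> A \<and> partial_order_on A r"

definition chain_on :: "'a set \<Rightarrow> ('a \<times> 'a) set \<Rightarrow> bool" where
  "chain_on A r \<longleftrightarrow> r \<subseteq> A \<times> A \<and> linear_order_on A r"

definition is_join :: "'a set \<Rightarrow> ('a \<times> 'a) set \<Rightarrow> 'a \<Rightarrow> 'a \<Rightarrow> 'a \<Rightarrow> bool" where
  "is_join A r x y z \<longleftrightarrow> z \<in> A \<and> (x, z) \<in> r \<and> (y, z) \<in> r \<and>
     (\<forall>w\<in>A. (x, w) \<in> r \<and> (y, w) \<in> r \<longrightarrow> (z, w) \<in> r)"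

definition join_semilattice :: "'a set \<Rightarrow> ('a \<times> 'a) set \<Rightarrow> bool" where
  "join_semilattice A r \<longleftrightarrow> poset_on A r \<and> (\<forall>x\<in>A. \<forall>y\<in>A. \<exists>z. is_join A r x y z)"

definition join_embedding ::
  "'a set \<Rightarrow> ('a \<times> 'a) set \<Rightarrow> 'b set \<Rightarrow> ('b \<times> 'b) set \<Rightarrow> ('a \<Rightarrow> 'b) \<Rightarrow> bool" where
  "join_embedding A r B s f \<longleftrightarrow> f ` A \<subseteq> B \<and> inj_on f A \<and>
     (\<forall>x\<in>A. \<forall>y\<in>A. \<forall>z\<in>A. is_join A r x y z \<longrightarrow> is_join B s (f x) (f y) (f z))"

definition equimorphic ::
  "'a set \<Rightarrow> ('a \<times> 'a) set \<Rightarrow> 'b set \<Rightarrow> ('b \<times> 'b) set \<Rightarrow> bool" where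
  "equimorphic A r B s \<longleftrightarrow> (\<exists>f. join_embedding A r B s f) \<and> (\<exists>g. join_embedding B s A r g)"

definition order_isomorphic ::
  "'a set \<Rightarrow> ('a \<times> 'a) set \<Rightarrow> 'b set \<Rightarrow> ('b \<times> 'b) set \<Rightarrow> bool" where
  "order_isomorphic A r B s \<longleftrightarrow>
     (\<exists>g. bij_betw g A B \<and> (\<forall>x\<in>A. \<forall>y\<in>A. (x, y) \<in> r \<longleftrightarrow> (g x, g y) \<in> s))"

definition restr :: "('a \<times> 'a) set \<Rightarrow> 'a set \<Rightarrow> ('a \<times> 'a) set" where
  "restr r A = r \<inter> (A \<times> A)"

definition order_type_omega :: "'a set \<Rightarrow> ('a \<times> 'a) set \<Rightarrow> bool" where
  "order_type_omega A r \<longleftrightarrow>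
     (\<exists>g::nat \<Rightarrow> 'a. bij_betw g UNIV A \<and> (\<forall>m n. (g m, g n) \<in> r \<longleftrightarrow> m \<le> n))"

definition order_scattered :: "'a set \<Rightarrow> ('a \<times> 'a) set \<Rightarrow> bool" where
  "order_scattered A r \<longleftrightarrow>
     \<not> (\<exists>h::rat \<Rightarrow> 'a. range h \<subseteq> A \<and> inj h \<and> (\<forall>p q. p \<le> q \<longleftrightarrow> (h p, h q) \<in> r))"

definition bichain :: "'x set \<Rightarrow> ('x \<times> 'x) set \<Rightarrow> ('x \<times> 'x) set \<Rightarrow> bool" where
  "bichain X r1 r2 \<longleftrightarrow> chain_on X r1 \<and> chain_on X r2"

definition initial_segment :: "'x set \<Rightarrow> ('x \<times> 'x) set \<Rightarrow> 'x set \<Rightarrow> bool" where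
  "initial_segment X r I \<longleftrightarrow> I \<subseteq> X \<and> (\<forall>x\<in>I. \<forall>y\<in>X. (y, x) \<in> r \<longrightarrow> y \<in> I)"

definition bichain_closed :: "'x set \<Rightarrow> ('x \<times> 'x) set \<Rightarrow> ('x \<times> 'x) set \<Rightarrow> 'x set \<Rightarrow> bool" where
  "bichain_closed X r1 r2 C \<longleftrightarrow>
     (\<exists>I1 I2. initial_segment X r1 I1 \<and> initial_segment X r2 I2 \<and> C = I1 \<inter> I2)"

definition bichain_closure :: "'x set \<Rightarrow> ('x \<times> 'x) set \<Rightarrow> ('x \<times> 'x) set \<Rightarrow> 'x set \<Rightarrow> 'x set" where
  "bichain_closure X r1 r2 A = \<Inter> {C. bichain_closed X r1 r2 C \<and> A \<subseteq> C}"

definition compacts :: "'x set \<Rightarrow> ('x \<times> 'x) set \<Rightarrow> ('x \<times> 'x) set \<Rightarrow> 'x set set" where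
  "compacts X r1 r2 = {bichain_closure X r1 r2 F | F. finite F \<and> F \<subseteq> X}"

definition compacts_order :: "'x set \<Rightarrow> ('x \<times> 'x) set \<Rightarrow> ('x \<times> 'x) set \<Rightarrow> ('x set \<times> 'x set) set" where
  "compacts_order X r1 r2 = {(A, B). A \<in> compacts X r1 r2 \<and> B \<in> compacts X r1 r2 \<and> A \<subseteq> B}"

text \<open>(S, s) is isomorphic to K(C(B)) for the bichain B = (X, r1, r2) with (X, r1) of order
  type omega and (X, r2) not order-scattered; i.e. B witnesses membership of (S, s) in L_D.\<close>
definition LD_witness ::
  "'a set \<Rightarrow> ('a \<times> 'a) set \<Rightarrow> 'x set \<Rightarrow> ('x \<times> 'x) set \<Rightarrow> ('x \<times> 'x) set \<Rightarrow> bool" where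
  "LD_witness S s X r1 r2 \<longleftrightarrow> bichain X r1 r2 \<and> order_type_omega X r1 \<and>
     \<not> order_scattered X r2 \<and> order_isomorphic S s (compacts X r1 r2) (compacts_order X r1 r2)"

definition prod_order :: "('b \<times> 'b) set \<Rightarrow> ('c \<times> 'c) set \<Rightarrow> (('b \<times> 'c) \<times> ('b \<times> 'c)) set" where
  "prod_order r1 r2 = {((a, b), (c, d)). (a, c) \<in> r1 \<and> (b, d) \<in> r2}"

definition chain_product_rep ::
  "'a set \<Rightarrow> ('a \<times> 'a) set \<Rightarrow> 'b set \<Rightarrow> ('b \<times> 'b) set \<Rightarrow> 'c set \<Rightarrow> ('c \<times> 'c) set
     \<Rightarrow> ('a \<Rightarrow> 'b \<times> 'c) \<Rightarrow> bool" where
  "chain_product_rep S s X1 r1 X2 r2 f \<longleftrightarrow>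
     chain_on X1 r1 \<and> chain_on X2 r2 \<and>
     join_embedding S s (X1 \<times> X2) (prod_order r1 r2) f \<and>
     (let T = f ` S; A1 = fst ` T; A2 = snd ` T in
        order_type_omega A1 (restr r1 A1) \<and>
        \<not> order_scattered A2 (restr r2 A2) \<and>
        (\<forall>x\<in>A1. finite (({x} \<times> A2) \<inter> T)))"

end

theory Submission
  imports Defs
begin

(*
  Enumerate X by g along its first order, of type omega. A compact set of C(B) is determined by
  its greatest elements g i for the first order and g j for the second, so K(C(B)) is isomorphic
  to a join-closed set of codes (i, j) in the product of omega with the second order transported
  to indices.

  If S is equimorphic to K(C(B)), its embedding into the codes is the required representation: the
  first projection is an infinite set of naturals and the fibres are finite because j <= i.
  Composing with the embedding back gives an injective join-preserving self-map of the codes. Two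
  diagonal codes whose indices are ordered oppositely by the two orders have a third code as their
  join, so their images are incomparable; as the first coordinate of the images is finite-to-one,
  this turns the second coordinates of the images of the rational copy inside the second order
  into a dense chain, which contains a copy of Q.

  Conversely, let T be the image of S in a product of chains. Finite fibres make its second
  projection countable, so that projection embeds into the rational copy of the second order of B;
  together with a fast-growing choice of first coordinates this embeds T into the codes. A forth
  construction inside T, along the rational copy in its second projection, embeds the codes into
  T.
*)

section \<open>Joins in products of chains\<close>

lemma chain_on_refl: "chain_on X r \<Longrightarrow> a \<in> X \<Longrightarrow> (a, a) \<in> r"
  unfolding chain_on_def linear_order_on_def partial_order_on_def preorder_on_def refl_on_def
  by blast

lemma chain_on_trans: "chain_on X r \<Longrightarrow> (a, b) \<in> r \<Longrightarrow> (b, c) \<in> r \<Longrightarrow> (a, c) \<in> r"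
  unfolding chain_on_def linear_order_on_def partial_order_on_def preorder_on_def by (meson transE)

lemma chain_on_antisym: "chain_on X r \<Longrightarrow> (a, b) \<in> r \<Longrightarrow> (b, a) \<in> r \<Longrightarrow> a = b"
  unfolding chain_on_def linear_order_on_def partial_order_on_def by (meson antisymD)

lemma chain_on_total: "chain_on X r \<Longrightarrow> a \<in> X \<Longrightarrow> b \<in> X \<Longrightarrow> (a, b) \<in> r \<or> (b, a) \<in> r"
  using chain_on_refl[of X r a]
  unfolding chain_on_def linear_order_on_def total_on_def by (cases "a = b") auto

lemma chain_onI:
  assumes "r \<subseteq> X \<times> X" "\<And>a. a \<in> X \<Longrightarrow> (a, a) \<in> r"
    "\<And>a b c. (a, b) \<in> r \<Longrightarrow> (b, c) \<in> r \<Longrightarrow> (a, c) \<in> r"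
    "\<And>a b. (a, b) \<in> r \<Longrightarrow> (b, a) \<in> r \<Longrightarrow> a = b"
    "\<And>a b. a \<in> X \<Longrightarrow> b \<in> X \<Longrightarrow> (a, b) \<in> r \<or> (b, a) \<in> r"
  shows "chain_on X r"
proof -
  have "refl_on X r" using assms(1,2) unfolding refl_on_def by blast
  moreover have "trans r" using assms(3) unfolding trans_def by blast
  moreover have "antisym r" using assms(4) unfolding antisym_def by blast
  moreover have "total_on X r" using assms(5) unfolding total_on_def by blast
  ultimately show ?thesis using assms(1)
    unfolding chain_on_def linear_order_on_def partial_order_on_def preorder_on_def by blast
qed

lemma chain_on_natLeq: "chain_on UNIV natLeq"
  using natLeq_Linear_order unfolding chain_on_def by (simp add: Field_natLeq)

lemma chain_on_image:
  assumes c: "chain_on X r" and i: "inj \<iota>"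
  shows "chain_on (\<iota> ` X) (map_prod \<iota> \<iota> ` r)"
proof (rule chain_onI)
  have mem: "(\<iota> a, \<iota> b) \<in> map_prod \<iota> \<iota> ` r \<longleftrightarrow> (a, b) \<in> r" for a b
    using i by (auto simp: inj_eq)
  have elim: "\<exists>x y. a = \<iota> x \<and> b = \<iota> y \<and> (x, y) \<in> r" if "(a, b) \<in> map_prod \<iota> \<iota> ` r" for a b
    using that by auto
  show "map_prod \<iota> \<iota> ` r \<subseteq> \<iota> ` X \<times> \<iota> ` X"
    using c unfolding chain_on_def by auto
  show "(a, a) \<in> map_prod \<iota> \<iota> ` r" if "a \<in> \<iota> ` X" for a
    using that mem chain_on_refl[OF c] by blast
  show "(a, d) \<in> map_prod \<iota> \<iota> ` r"
    if "(a, b) \<in> map_prod \<iota> \<iota> ` r" "(b, d) \<in> map_prod \<iota> \<iota> ` r" for a b d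
    using elim[OF that(1)] elim[OF that(2)] mem chain_on_trans[OF c] i by (metis injD)
  show "a = b" if "(a, b) \<in> map_prod \<iota> \<iota> ` r" "(b, a) \<in> map_prod \<iota> \<iota> ` r" for a b
    using elim[OF that(1)] that(2) mem chain_on_antisym[OF c] by metis
  show "(a, b) \<in> map_prod \<iota> \<iota> ` r \<or> (b, a) \<in> map_prod \<iota> \<iota> ` r"
    if "a \<in> \<iota> ` X" "b \<in> \<iota> ` X" for a b
    using that mem chain_on_total[OF c] by blast
qed

definition chain_max :: "('a \<times> 'a) set \<Rightarrow> 'a \<Rightarrow> 'a \<Rightarrow> 'a" where
  "chain_max r a b = (if (a, b) \<in> r then b else a)"

lemma chain_max_in: "a \<in> X \<Longrightarrow> b \<in> X \<Longrightarrow> chain_max r a b \<in> X"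
  unfolding chain_max_def by auto

lemma chain_max_upper1: "chain_on X r \<Longrightarrow> a \<in> X \<Longrightarrow> b \<in> X \<Longrightarrow> (a, chain_max r a b) \<in> r"
  unfolding chain_max_def using chain_on_refl by fastforce

lemma chain_max_upper2: "chain_on X r \<Longrightarrow> a \<in> X \<Longrightarrow> b \<in> X \<Longrightarrow> (b, chain_max r a b) \<in> r"
  unfolding chain_max_def using chain_on_refl chain_on_total by fastforce

lemma chain_max_least: "(a, c) \<in> r \<Longrightarrow> (b, c) \<in> r \<Longrightarrow> (chain_max r a b, c) \<in> r"
  unfolding chain_max_def by auto

lemma chain_max_eq_right: "(a, b) \<in> r \<Longrightarrow> chain_max r a b = b"
  unfolding chain_max_def by auto

lemma chain_max_eq_left: "chain_on X r \<Longrightarrow> (b, a) \<in> r \<Longrightarrow> chain_max r a b = a"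
  unfolding chain_max_def using chain_on_antisym by fastforce

lemma chain_max_order_embedding:
  assumes "x \<in> A" and "y \<in> A" and "(x, y) \<in> r \<longleftrightarrow> (f x, f y) \<in> s"
  shows "f (chain_max r x y) = chain_max s (f x) (f y)"
  unfolding chain_max_def using assms by auto

lemma chain_max_natLeq: "chain_max natLeq a b = max a b"
  unfolding chain_max_def natLeq_def by auto

definition prod_join :: "('b \<times> 'b) set \<Rightarrow> ('c \<times> 'c) set \<Rightarrow> 'b \<times> 'c \<Rightarrow> 'b \<times> 'c \<Rightarrow> 'b \<times> 'c" where
  "prod_join r1 r2 u v = (chain_max r1 (fst u) (fst v), chain_max r2 (snd u) (snd v))"

lemma prod_order_iff: "((a, b), (c, d)) \<in> prod_order r1 r2 \<longleftrightarrow> (a, c) \<in> r1 \<and> (b, d) \<in> r2"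
  unfolding prod_order_def by auto

lemma prod_order_antisym:
  "chain_on X1 r1 \<Longrightarrow> chain_on X2 r2 \<Longrightarrow> (u, v) \<in> prod_order r1 r2 \<Longrightarrow> (v, u) \<in> prod_order r1 r2
    \<Longrightarrow> u = v"
  by (cases u; cases v) (auto simp: prod_order_iff dest: chain_on_antisym)

lemma prod_join_in: "u \<in> X1 \<times> X2 \<Longrightarrow> v \<in> X1 \<times> X2 \<Longrightarrow> prod_join r1 r2 u v \<in> X1 \<times> X2"
  unfolding prod_join_def by (auto intro: chain_max_in)

lemma prod_join_upper1:
  "chain_on X1 r1 \<Longrightarrow> chain_on X2 r2 \<Longrightarrow> u \<in> X1 \<times> X2 \<Longrightarrow> v \<in> X1 \<times> X2
    \<Longrightarrow> (u, prod_join r1 r2 u v) \<in> prod_order r1 r2"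
  by (cases u; cases v) (auto simp: prod_join_def prod_order_iff intro: chain_max_upper1)

lemma prod_join_upper2:
  "chain_on X1 r1 \<Longrightarrow> chain_on X2 r2 \<Longrightarrow> u \<in> X1 \<times> X2 \<Longrightarrow> v \<in> X1 \<times> X2
    \<Longrightarrow> (v, prod_join r1 r2 u v) \<in> prod_order r1 r2"
  by (cases u; cases v) (auto simp: prod_join_def prod_order_iff intro: chain_max_upper2)

lemma prod_join_least:
  "(u, w) \<in> prod_order r1 r2 \<Longrightarrow> (v, w) \<in> prod_order r1 r2
    \<Longrightarrow> (prod_join r1 r2 u v, w) \<in> prod_order r1 r2"
  by (cases u; cases v; cases w) (auto simp: prod_join_def prod_order_iff intro: chain_max_least)

definition join_closed :: "('b \<times> 'b) set \<Rightarrow> ('c \<times> 'c) set \<Rightarrow> ('b \<times> 'c) set \<Rightarrow> bool" where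
  "join_closed r1 r2 T \<longleftrightarrow> (\<forall>u\<in>T. \<forall>v\<in>T. prod_join r1 r2 u v \<in> T)"

lemma join_closed_product: "join_closed r1 r2 (X1 \<times> X2)"
  unfolding join_closed_def using prod_join_in by blast

lemma is_join_join_closed_iff:
  assumes c1: "chain_on X1 r1" and c2: "chain_on X2 r2" and TX: "T \<subseteq> X1 \<times> X2"
    and jc: "join_closed r1 r2 T" and u: "u \<in> T" and v: "v \<in> T"
  shows "is_join T (restr (prod_order r1 r2) T) u v w \<longleftrightarrow> w = prod_join r1 r2 u v"
proof
  have in_T: "prod_join r1 r2 u v \<in> T" using jc u v unfolding join_closed_def by auto
  have upper: "(u, prod_join r1 r2 u v) \<in> prod_order r1 r2"
    "(v, prod_join r1 r2 u v) \<in> prod_order r1 r2"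
    using prod_join_upper1[OF c1 c2, of u v] prod_join_upper2[OF c1 c2, of u v] u v TX by auto
  show "w = prod_join r1 r2 u v" if j: "is_join T (restr (prod_order r1 r2) T) u v w"
  proof (rule prod_order_antisym[OF c1 c2])
    show "(w, prod_join r1 r2 u v) \<in> prod_order r1 r2"
      using j in_T upper unfolding is_join_def restr_def by auto
    show "(prod_join r1 r2 u v, w) \<in> prod_order r1 r2"
      using j unfolding is_join_def restr_def by (auto intro: prod_join_least)
  qed
  show "is_join T (restr (prod_order r1 r2) T) u v w" if "w = prod_join r1 r2 u v"
    unfolding is_join_def restr_def using that in_T upper u v by (auto intro: prod_join_least)
qed

lemma is_join_prod_order_iff:
  assumes c1: "chain_on X1 r1" and c2: "chain_on X2 r2" and u: "u \<in> X1 \<times> X2" and v: "v \<in> X1 \<times> X2"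
  shows "is_join (X1 \<times> X2) (prod_order r1 r2) u v w \<longleftrightarrow> w = prod_join r1 r2 u v"
proof -
  have "restr (prod_order r1 r2) (X1 \<times> X2) = prod_order r1 r2"
    using c1 c2 unfolding restr_def prod_order_def chain_on_def by auto
  then show ?thesis
    using is_join_join_closed_iff[OF c1 c2 subset_refl join_closed_product u v] by simp
qed

lemma join_embedding_comp:
  "join_embedding A r B s f \<Longrightarrow> join_embedding B s C t g \<Longrightarrow> join_embedding A r C t (g \<circ> f)"
  unfolding join_embedding_def by (auto simp: image_subset_iff intro: comp_inj_on inj_on_subset)

lemma join_embedding_join_closedI:
  assumes c1: "chain_on X1 r1" and c2: "chain_on X2 r2" and TX: "T \<subseteq> X1 \<times> X2"
    and jc: "join_closed r1 r2 T"
    and d1: "chain_on Y1 s1" and d2: "chain_on Y2 s2" and TY: "T' \<subseteq> Y1 \<times> Y2"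
    and jc': "join_closed s1 s2 T'"
    and im: "F ` T \<subseteq> T'" and inj: "inj_on F T"
    and hom: "\<And>u v. u \<in> T \<Longrightarrow> v \<in> T \<Longrightarrow> F (prod_join r1 r2 u v) = prod_join s1 s2 (F u) (F v)"
  shows "join_embedding T (restr (prod_order r1 r2) T) T' (restr (prod_order s1 s2) T') F"
  unfolding join_embedding_def
proof (intro conjI im inj ballI impI)
  fix x y z assume x: "x \<in> T" and y: "y \<in> T" and "z \<in> T"
    and "is_join T (restr (prod_order r1 r2) T) x y z"
  then have "F z = prod_join s1 s2 (F x) (F y)"
    using is_join_join_closed_iff[OF c1 c2 TX jc x y] hom x y by simp
  moreover have "F x \<in> T'" "F y \<in> T'" using im x y by auto
  ultimately show "is_join T' (restr (prod_order s1 s2) T') (F x) (F y) (F z)"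
    using is_join_join_closed_iff[OF d1 d2 TY jc'] by simp
qed

lemma join_embedding_join_closed_product:
  assumes c1: "chain_on X1 r1" and c2: "chain_on X2 r2" and TX: "T \<subseteq> X1 \<times> X2"
    and jc: "join_closed r1 r2 T" and F: "join_embedding A r T (restr (prod_order r1 r2) T) F"
  shows "join_embedding A r (X1 \<times> X2) (prod_order r1 r2) F"
  unfolding join_embedding_def
proof (intro conjI ballI impI)
  show "F ` A \<subseteq> X1 \<times> X2" "inj_on F A" using F TX unfolding join_embedding_def by auto
  fix x y z assume x: "x \<in> A" and y: "y \<in> A" and z: "z \<in> A" and "is_join A r x y z"
  then have FT: "F x \<in> T" "F y \<in> T" and "is_join T (restr (prod_order r1 r2) T) (F x) (F y) (F z)"
    using F unfolding join_embedding_def by auto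
  then have "F z = prod_join r1 r2 (F x) (F y)" using is_join_join_closed_iff[OF c1 c2 TX jc]
      by blast
  then show "is_join (X1 \<times> X2) (prod_order r1 r2) (F x) (F y) (F z)"
    using is_join_prod_order_iff[OF c1 c2] FT TX by blast
qed

lemma join_embedding_join_closed_prod_join:
  assumes c1: "chain_on X1 r1" and c2: "chain_on X2 r2" and TX: "T \<subseteq> X1 \<times> X2"
    and jc: "join_closed r1 r2 T"
    and d1: "chain_on Y1 s1" and d2: "chain_on Y2 s2" and TY: "T' \<subseteq> Y1 \<times> Y2"
    and jc': "join_closed s1 s2 T'"
    and F: "join_embedding T (restr (prod_order r1 r2) T) T' (restr (prod_order s1 s2) T') F"
    and u: "u \<in> T" and v: "v \<in> T"
  shows "F (prod_join r1 r2 u v) = prod_join s1 s2 (F u) (F v)"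
proof -
  have in_T: "prod_join r1 r2 u v \<in> T" using jc u v unfolding join_closed_def by blast
  have "is_join T (restr (prod_order r1 r2) T) u v (prod_join r1 r2 u v)"
    using is_join_join_closed_iff[OF c1 c2 TX jc u v] by simp
  then have "is_join T' (restr (prod_order s1 s2) T') (F u) (F v) (F (prod_join r1 r2 u v))"
    using F u v in_T unfolding join_embedding_def by blast
  moreover have "F u \<in> T'" "F v \<in> T'" using F u v unfolding join_embedding_def by auto
  ultimately show ?thesis using is_join_join_closed_iff[OF d1 d2 TY jc'] by blast
qed

lemma is_join_bij_betw_iff:
  assumes bij: "bij_betw g A B" and ord: "\<And>x y. x \<in> A \<Longrightarrow> y \<in> A \<Longrightarrow> (x, y) \<in> r \<longleftrightarrow> (g x, g y) \<in> s"
    and x: "x \<in> A" and y: "y \<in> A" and z: "z \<in> A"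
  shows "is_join A r x y z \<longleftrightarrow> is_join B s (g x) (g y) (g z)"
proof -
  have B: "B = g ` A" using bij by (simp add: bij_betw_def)
  have "(\<forall>w\<in>A. (x, w) \<in> r \<and> (y, w) \<in> r \<longrightarrow> (z, w) \<in> r) \<longleftrightarrow>
        (\<forall>w\<in>A. (g x, g w) \<in> s \<and> (g y, g w) \<in> s \<longrightarrow> (g z, g w) \<in> s)"
    using ord x y z by blast
  also have "\<dots> \<longleftrightarrow> (\<forall>w\<in>B. (g x, w) \<in> s \<and> (g y, w) \<in> s \<longrightarrow> (g z, w) \<in> s)"
    unfolding B by blast
  finally show ?thesis unfolding is_join_def using z ord[OF x z] ord[OF y z] B by blast
qed

lemma join_embedding_bij_betw:
  assumes bij: "bij_betw g A B" and ord: "\<And>x y. x \<in> A \<Longrightarrow> y \<in> A \<Longrightarrow> (x, y) \<in> r \<longleftrightarrow> (g x, g y) \<in> s"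
  shows "join_embedding A r B s g"
  unfolding join_embedding_def
proof (intro conjI ballI impI)
  show "g ` A \<subseteq> B" "inj_on g A" using bij by (auto simp: bij_betw_def)
  show "is_join B s (g x) (g y) (g z)" if "x \<in> A" "y \<in> A" "z \<in> A" "is_join A r x y z" for x y z
    using that is_join_bij_betw_iff[OF bij ord] by blast
qed

lemma order_isomorphic_sym: "order_isomorphic A r B s \<Longrightarrow> order_isomorphic B s A r"
  unfolding order_isomorphic_def
proof (elim exE conjE, intro exI conjI ballI)
  fix g assume bij: "bij_betw g A B" and ord: "\<forall>x\<in>A. \<forall>y\<in>A. (x, y) \<in> r \<longleftrightarrow> (g x, g y) \<in> s"
  show "bij_betw (inv_into A g) B A" using bij by (rule bij_betw_inv_into)
  fix x y assume "x \<in> B" "y \<in> B"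
  then show "(x, y) \<in> s \<longleftrightarrow> (inv_into A g x, inv_into A g y) \<in> r"
    using ord bij by (simp add: bij_betw_def inv_into_into f_inv_into_f)
qed

lemma order_isomorphic_imp_equimorphic:
  assumes "order_isomorphic A r B s"
  shows "equimorphic A r B s"
proof -
  have emb: "\<exists>g. join_embedding A r B s g" if "order_isomorphic A r B s" for A r B s
    using that join_embedding_bij_betw unfolding order_isomorphic_def by (elim exE conjE) blast
  show ?thesis
    using emb[OF assms] emb[OF order_isomorphic_sym[OF assms]] unfolding equimorphic_def by blast
qed

lemma equimorphic_sym: "equimorphic A r B s \<Longrightarrow> equimorphic B s A r"
  unfolding equimorphic_def by blast

lemma equimorphic_trans: "equimorphic A r B s \<Longrightarrow> equimorphic B s C t \<Longrightarrow> equimorphic A r C t"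
  unfolding equimorphic_def by (metis join_embedding_comp)

lemma is_join_self_iff:
  assumes "poset_on S s" and "x \<in> S" and "y \<in> S"
  shows "is_join S s x y y \<longleftrightarrow> (x, y) \<in> s"
  using assms unfolding poset_on_def partial_order_on_def preorder_on_def refl_on_def is_join_def
  by blast

lemma prod_join_eq_right_iff:
  assumes "chain_on X1 r1" and "chain_on X2 r2" and "u \<in> X1 \<times> X2" and "v \<in> X1 \<times> X2"
  shows "prod_join r1 r2 u v = v \<longleftrightarrow> (u, v) \<in> prod_order r1 r2"
  using prod_join_upper1[OF assms] chain_max_eq_right[of _ _ r1] chain_max_eq_right[of _ _ r2]
  by (cases u; cases v) (auto simp: prod_join_def prod_order_iff)

lemma join_embedding_prod_join:
  assumes c1: "chain_on X1 r1" and c2: "chain_on X2 r2"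
    and f: "join_embedding S s (X1 \<times> X2) (prod_order r1 r2) f"
    and x: "x \<in> S" and y: "y \<in> S" and j: "is_join S s x y z"
  shows "f z = prod_join r1 r2 (f x) (f y)"
proof -
  have z: "z \<in> S" using j unfolding is_join_def by simp
  have "is_join (X1 \<times> X2) (prod_order r1 r2) (f x) (f y) (f z)"
    using f x y z j unfolding join_embedding_def by blast
  moreover have "f x \<in> X1 \<times> X2" "f y \<in> X1 \<times> X2" using f x y unfolding join_embedding_def by auto
  ultimately show ?thesis using is_join_prod_order_iff[OF c1 c2, of "f x" "f y" "f z"] by simp
qed

lemma is_join_unique: "poset_on A r \<Longrightarrow> is_join A r x y z \<Longrightarrow> is_join A r x y z' \<Longrightarrow> z = z'"
  unfolding poset_on_def partial_order_on_def is_join_def by (meson antisymD)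

lemma join_semilattice_image_product:
  assumes S: "join_semilattice S s" and c1: "chain_on X1 r1" and c2: "chain_on X2 r2"
    and f: "join_embedding S s (X1 \<times> X2) (prod_order r1 r2) f"
  shows "join_closed r1 r2 (f ` S)"
    and "order_isomorphic S s (f ` S) (restr (prod_order r1 r2) (f ` S))"
proof -
  have inj: "inj_on f S" and fS: "f ` S \<subseteq> X1 \<times> X2" using f unfolding join_embedding_def by auto
  have poset: "poset_on S s" using S unfolding join_semilattice_def by simp
  have join: "\<exists>z\<in>S. is_join S s x y z \<and> f z = prod_join r1 r2 (f x) (f y)"
      if x: "x \<in> S" and y: "y \<in> S" for x y
  proof -
    obtain z where z: "is_join S s x y z" using S x y unfolding join_semilattice_def by blast
    then have "z \<in> S" unfolding is_join_def by simp
    with z show ?thesis using join_embedding_prod_join[OF c1 c2 f x y z] by blast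
  qed
  show "join_closed r1 r2 (f ` S)"
    unfolding join_closed_def
  proof (intro ballI)
    fix u v assume "u \<in> f ` S" "v \<in> f ` S"
    then obtain x y where "x \<in> S" "y \<in> S" "u = f x" "v = f y" by blast
    with join[of x y] show "prod_join r1 r2 u v \<in> f ` S" by (metis image_eqI)
  qed
  have "(x, y) \<in> s \<longleftrightarrow> (f x, f y) \<in> restr (prod_order r1 r2) (f ` S)" if x: "x \<in> S" and y: "y \<in> S"
      for x y
  proof -
    obtain z where z: "z \<in> S" "is_join S s x y z" "f z = prod_join r1 r2 (f x) (f y)"
      using join[OF x y] by blast
    have "(x, y) \<in> s \<longleftrightarrow> is_join S s x y y" using is_join_self_iff[OF poset x y] by simp
    also have "\<dots> \<longleftrightarrow> z = y" using is_join_unique[OF poset z(2)] z(2) by blast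
    also have "\<dots> \<longleftrightarrow> prod_join r1 r2 (f x) (f y) = f y"
      using z(1,3) y inj by (auto dest: inj_onD)
    also have "\<dots> \<longleftrightarrow> (f x, f y) \<in> prod_order r1 r2"
      using prod_join_eq_right_iff[OF c1 c2, of "f x" "f y"] fS x y by auto
    also have "\<dots> \<longleftrightarrow> (f x, f y) \<in> restr (prod_order r1 r2) (f ` S)"
      using x y unfolding restr_def by auto
    finally show ?thesis .
  qed
  then show "order_isomorphic S s (f ` S) (restr (prod_order r1 r2) (f ` S))"
    unfolding order_isomorphic_def bij_betw_def using inj by blast
qed

section \<open>Embedding countable orders into dense ones\<close>

lemma finite_has_greatest_wrt:
  assumes "finite L" and "L \<noteq> {}" and "L \<subseteq> K"
    and trans: "\<And>a b c. lt a b \<Longrightarrow> lt b c \<Longrightarrow> lt a c"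
    and total: "\<And>a b. a \<in> K \<Longrightarrow> b \<in> K \<Longrightarrow> a \<noteq> b \<Longrightarrow> lt a b \<or> lt b a"
  shows "\<exists>m\<in>L. \<forall>l\<in>L. l = m \<or> lt l m"
  using assms(1-3)
proof (induction L rule: finite_ne_induct)
  case (singleton x)
  then show ?case by simp
next
  case (insert x F)
  then obtain m where m: "m \<in> F" "\<forall>l\<in>F. l = m \<or> lt l m" by auto
  show ?case
  proof (cases "lt m x")
    case True
    have "l = x \<or> lt l x" if "l \<in> insert x F" for l
      using that m trans[of l m x] True by (metis insert_iff)
    then show ?thesis by blast
  next
    case False
    then have "x = m \<or> lt x m" using total[of x m] insert m by auto
    then show ?thesis using m by blast
  qed
qed

text \<open>The forth half of Cantor's back-and-forth argument, embedding a linear order on \<open>nat\<close>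
  between two points \<open>lo\<close> and \<open>hi\<close> of a dense order. The order compares keys of elements of \<open>E\<close>,
  and \<open>ok\<close> constrains each chosen element relative to the previously chosen one.\<close>

locale forth_embedding =
  fixes le :: "nat \<Rightarrow> nat \<Rightarrow> bool" and lt :: "'k \<Rightarrow> 'k \<Rightarrow> bool" and key :: "'t \<Rightarrow> 'k"
    and E :: "'t set" and ok :: "'t \<Rightarrow> 't \<Rightarrow> bool" and lo hi :: 't
  assumes le_total: "\<And>i j. le i j \<or> le j i"
    and le_antisym: "\<And>i j. le i j \<Longrightarrow> le j i \<Longrightarrow> i = j"
    and le_trans: "\<And>i j k. le i j \<Longrightarrow> le j k \<Longrightarrow> le i k"
    and lt_trans: "\<And>a b c. lt a b \<Longrightarrow> lt b c \<Longrightarrow> lt a c"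
    and lt_total: "\<And>a b. a \<in> key ` E \<Longrightarrow> b \<in> key ` E \<Longrightarrow> a \<noteq> b \<Longrightarrow> lt a b \<or> lt b a"
    and lo: "lo \<in> E" and hi: "hi \<in> E" and lo_hi: "lt (key lo) (key hi)"
    and dense: "\<And>a b p. a \<in> E \<Longrightarrow> b \<in> E \<Longrightarrow> p \<in> E \<Longrightarrow> lt (key a) (key b) \<Longrightarrow>
        \<exists>c\<in>E. lt (key a) (key c) \<and> lt (key c) (key b) \<and> ok p c"
begin

lemma exists_between:
  assumes L: "finite L" "L \<noteq> {}" "L \<subseteq> E" and U: "finite U" "U \<noteq> {}" "U \<subseteq> E" and "p \<in> E"
    and sep: "\<And>a b. a \<in> L \<Longrightarrow> b \<in> U \<Longrightarrow> lt (key a) (key b)"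
  shows "\<exists>c\<in>E. (\<forall>a\<in>L. lt (key a) (key c)) \<and> (\<forall>b\<in>U. lt (key c) (key b)) \<and> ok p c"
proof -
  have "\<exists>l\<in>key ` L. \<forall>x\<in>key ` L. x = l \<or> lt x l"
    by (rule finite_has_greatest_wrt[where K = "key ` E"]) (use L lt_trans lt_total in auto)
  then obtain a where a: "a \<in> L" "\<forall>x\<in>L. key x = key a \<or> lt (key x) (key a)" by auto
  have "\<exists>u\<in>key ` U. \<forall>x\<in>key ` U. x = u \<or> lt u x"
    by (rule finite_has_greatest_wrt[where K = "key ` E" and lt = "\<lambda>x y. lt y x"])
      (use U lt_trans lt_total in auto)
  then obtain b where b: "b \<in> U" "\<forall>x\<in>U. key x = key b \<or> lt (key b) (key x)" by auto
  obtain c where c: "c \<in> E" "lt (key a) (key c)" "lt (key c) (key b)" "ok p c"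
    using dense[of a b p] sep[OF a(1) b(1)] a(1) b(1) L(3) U(3) \<open>p \<in> E\<close> by blast
  have "lt (key x) (key c)" if "x \<in> L" for x
    using a(2) that c(2) lt_trans[of "key x" "key a" "key c"] by auto
  moreover have "lt (key c) (key x)" if "x \<in> U" for x
    using b(2) that c(3) lt_trans[of "key c" "key b" "key x"] by auto
  ultimately show ?thesis using c by blast
qed

definition admissible :: "(nat \<Rightarrow> 't) \<Rightarrow> nat \<Rightarrow> 't \<Rightarrow> bool" where
  "admissible f k c \<longleftrightarrow> c \<in> E \<and> lt (key lo) (key c) \<and> lt (key c) (key hi) \<and>
     (\<forall>i<k. (le i k \<longrightarrow> lt (key (f i)) (key c)) \<and> (le k i \<longrightarrow> lt (key c) (key (f i)))) \<and>
     ok (if k = 0 then lo else f (k - 1)) c"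

lemma admissible_cong: "(\<And>i. i < k \<Longrightarrow> f i = g i) \<Longrightarrow> admissible f k c = admissible g k c"
  unfolding admissible_def by (cases k) auto

primrec approx :: "nat \<Rightarrow> nat \<Rightarrow> 't" where
  "approx 0 = (\<lambda>_. lo)"
| "approx (Suc k) = (approx k)(k := (SOME c. admissible (approx k) k c))"

definition seq :: "nat \<Rightarrow> 't" where
  "seq k = approx (Suc k) k"

lemma approx_eq_seq: "i < k \<Longrightarrow> approx k i = seq i"
  by (induction k) (auto simp: seq_def less_Suc_eq)

lemma seq_eq_some: "seq k = (SOME c. admissible seq k c)"
proof -
  have "admissible (approx k) k = admissible seq k"
    using admissible_cong[of k "approx k" seq] approx_eq_seq by blast
  then show ?thesis by (simp add: seq_def)
qed

lemma seq_admissible: "admissible seq k (seq k)"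
proof (induction k rule: less_induct)
  case (less k)
  define L where "L = insert lo (seq ` {i. i < k \<and> le i k})"
  define U where "U = insert hi (seq ` {i. i < k \<and> le k i})"
  have in_E: "seq i \<in> E" if "i < k" for i using less that unfolding admissible_def by blast
  have sep: "lt (key a) (key b)" if "a \<in> L" "b \<in> U" for a b
  proof -
    have "lt (key lo) (key (seq j))" "lt (key (seq i)) (key hi)" if "i < k" "j < k" for i j
      using less that unfolding admissible_def by blast+
    moreover have "lt (key (seq i)) (key (seq j))" if "i < k" "j < k" "le i k" "le k j" for i j
    proof -
      have "le i j" "i \<noteq> j" using that le_trans le_antisym by blast+
      then show ?thesis using less[of i] less[of j] that unfolding admissible_def
          by (cases "i < j") auto
    qed
    ultimately show ?thesis using that lo_hi unfolding L_def U_def by auto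
  qed
  have "seq (k - 1) \<in> E" if "k \<noteq> 0" using in_E that by simp
  then have p: "(if k = 0 then lo else seq (k - 1)) \<in> E" using lo by simp
  have LU: "finite L" "L \<noteq> {}" "L \<subseteq> E" "finite U" "U \<noteq> {}" "U \<subseteq> E"
    using lo hi in_E unfolding L_def U_def by auto
  obtain c where "c \<in> E" "\<forall>a\<in>L. lt (key a) (key c)" "\<forall>b\<in>U. lt (key c) (key b)"
      "ok (if k = 0 then lo else seq (k - 1)) c"
    using exists_between[OF LU p sep] by blast
  then have "admissible seq k c" unfolding admissible_def L_def U_def by auto
  then show ?case by (subst seq_eq_some, rule someI)
qed

lemma seq_in: "seq i \<in> E"
  using seq_admissible unfolding admissible_def by blast

lemma seq_strict_mono: "le i j \<Longrightarrow> i \<noteq> j \<Longrightarrow> lt (key (seq i)) (key (seq j))"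
  using seq_admissible[of i] seq_admissible[of j] unfolding admissible_def by (cases "i < j") auto

lemma seq_between: "lt (key lo) (key (seq i))" "lt (key (seq i)) (key hi)"
  using seq_admissible unfolding admissible_def by blast+

lemma seq_ok: "ok lo (seq 0)" "ok (seq i) (seq (Suc i))"
  using seq_admissible[of 0] seq_admissible[of "Suc i"] unfolding admissible_def by auto

end

lemma dense_order_has_rat_copy:
  fixes lt :: "'k \<Rightarrow> 'k \<Rightarrow> bool" and key :: "'t \<Rightarrow> 'k"
  assumes lt_trans: "\<And>a b c. lt a b \<Longrightarrow> lt b c \<Longrightarrow> lt a c"
    and lt_total: "\<And>a b. a \<in> key ` E \<Longrightarrow> b \<in> key ` E \<Longrightarrow> a \<noteq> b \<Longrightarrow> lt a b \<or> lt b a"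
    and lo: "lo \<in> E" and hi: "hi \<in> E" and lo_hi: "lt (key lo) (key hi)"
    and dense: "\<And>a b. a \<in> E \<Longrightarrow> b \<in> E \<Longrightarrow> lt (key a) (key b) \<Longrightarrow>
        \<exists>c\<in>E. lt (key a) (key c) \<and> lt (key c) (key b)"
  shows "\<exists>h::rat \<Rightarrow> 't. range h \<subseteq> E \<and> (\<forall>p q. p < q \<longrightarrow> lt (key (h p)) (key (h q)))"
proof -
  define en :: "nat \<Rightarrow> rat" where "en = from_nat_into UNIV"
  have "bij en" unfolding en_def
    by (rule bij_betw_from_nat_into) (simp_all add: infinite_UNIV_char_0)
  then have inj: "inj en" and en_inv: "en (inv en p) = p" for p
    by (auto simp: bij_def surj_f_inv_f)
  interpret forth_embedding "\<lambda>i j. en i \<le> en j" lt key E "\<lambda>_ _. True" lo hi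
    by unfold_locales (use inj lt_trans lt_total lo hi lo_hi dense in \<open>auto dest: injD\<close>)
  have "lt (key (seq (inv en p))) (key (seq (inv en q)))" if "p < q" for p q
    using seq_strict_mono[of "inv en p" "inv en q"] en_inv[of p] en_inv[of q] that by force
  then show ?thesis using seq_in by (intro exI[of _ "\<lambda>p. seq (inv en p)"]) auto
qed

lemma countable_chain_embeds_rat_interval:
  assumes chain: "chain_on Y r" and "A \<subseteq> Y" and "countable A" and "infinite A"
  shows "\<exists>\<phi>::'a \<Rightarrow> rat. (\<forall>c\<in>A. 0 < \<phi> c \<and> \<phi> c < 1) \<and>
           (\<forall>c\<in>A. \<forall>c'\<in>A. (c, c') \<in> r \<longleftrightarrow> \<phi> c \<le> \<phi> c')"
proof -
  define en where "en = from_nat_into A"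
  have bij: "bij_betw en UNIV A" unfolding en_def using assms(3,4) by (rule bij_betw_from_nat_into)
  then have "en i \<in> A" and en_inv: "c \<in> A \<Longrightarrow> en (inv en c) = c" for i c
    by (auto simp: bij_betw_def bij_betw_inv_into_right)
  then have en_in: "en i \<in> Y" for i using assms(2) by blast
  have en_inj: "en i = en j \<Longrightarrow> i = j" for i j using bij by (auto simp: bij_betw_def dest: injD)
  interpret forth_embedding "\<lambda>i j. (en i, en j) \<in> r" "(<)" "\<lambda>x. x" "UNIV :: rat set"
      "\<lambda>_ _. True" 0 1
  proof unfold_locales
    fix a b :: rat assume "a < b" then show "\<exists>c\<in>UNIV. a < c \<and> c < b \<and> True" using dense by blast
  qed (use en_in en_inj chain_on_total[OF chain] chain_on_antisym[OF chain] chain_on_trans[OF chain]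
      in \<open>auto\<close>)
  define \<phi> where "\<phi> c = seq (inv en c)" for c
  have mono: "(c, c') \<in> r \<Longrightarrow> c \<noteq> c' \<Longrightarrow> \<phi> c < \<phi> c'" if "c \<in> A" "c' \<in> A" for c c'
    using seq_strict_mono[of "inv en c" "inv en c'"] en_inv that unfolding \<phi>_def by metis
  have "(c, c') \<in> r \<longleftrightarrow> \<phi> c \<le> \<phi> c'" if "c \<in> A" "c' \<in> A" for c c'
  proof -
    have "c \<in> Y" "c' \<in> Y" using that assms(2) by auto
    then show ?thesis
      using mono[OF that] mono[OF that(2,1)] chain_on_total[OF chain, of c c']
        chain_on_refl[OF chain, of c]
      by (cases "c = c'") force+
  qed
  moreover have "0 < \<phi> c \<and> \<phi> c < 1" for c unfolding \<phi>_def using seq_between by simp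
  ultimately show ?thesis by blast
qed

section \<open>Order types and relabelling of representations\<close>

lemma not_order_scattered_if_rat_chain:
  fixes H :: "rat \<Rightarrow> 'a"
  assumes chain: "chain_on Y R" and "A \<subseteq> Y" and "range H \<subseteq> A"
    and mono: "\<And>p q. p < q \<Longrightarrow> (H p, H q) \<in> R \<and> H p \<noteq> H q"
  shows "\<not> order_scattered A (restr R A)"
proof -
  have "inj H" by (metis injI mono linorder_neq_iff)
  moreover have "p \<le> q \<longleftrightarrow> (H p, H q) \<in> restr R A" for p q
  proof
    show "(H p, H q) \<in> restr R A" if "p \<le> q"
      using that mono[of p q] chain_on_refl[OF chain, of "H p"] assms(2,3) unfolding restr_def
      by (cases "p = q") auto
    show "p \<le> q" if "(H p, H q) \<in> restr R A"
      using that mono[of q p] chain_on_antisym[OF chain] unfolding restr_def by force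
  qed
  ultimately show ?thesis using assms(3) unfolding order_scattered_def by blast
qed

lemma order_type_omega_infinite_nat: "infinite (A :: nat set) \<Longrightarrow> order_type_omega A (restr natLeq A)"
  unfolding order_type_omega_def
proof (intro exI conjI allI)
  assume inf: "infinite A"
  have sm: "strict_mono (enumerate A)" using inf by (rule strict_mono_enumerate)
  show "bij_betw (enumerate A) UNIV A"
    unfolding bij_betw_def using sm range_enumerate[OF inf] strict_mono_imp_inj_on by blast
  show "(enumerate A m, enumerate A n) \<in> restr natLeq A \<longleftrightarrow> m \<le> n" for m n
    using enumerate_in_set[OF inf] sm unfolding restr_def natLeq_def
    by (auto simp: strict_mono_less_eq)
qed

lemma infinite_nat_strict_mono_above:
  fixes N :: "nat set" and b :: "nat \<Rightarrow> nat"
  assumes "infinite N"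
  shows "\<exists>Z. strict_mono Z \<and> range Z \<subseteq> N \<and> (\<forall>n. b n < Z n)"
proof -
  define pick where "pick k = (SOME y. y \<in> N \<and> k < y)" for k
  have pick: "pick k \<in> N \<and> k < pick k" for k
  proof -
    have "\<exists>y. y \<in> N \<and> k < y" using assms unfolding infinite_nat_iff_unbounded by blast
    then show ?thesis unfolding pick_def by (rule someI_ex)
  qed
  define Z where "Z = rec_nat (pick (b 0)) (\<lambda>n z. pick (max (b (Suc n)) z))"
  have Z_0: "Z 0 = pick (b 0)" and Z_Suc: "Z (Suc n) = pick (max (b (Suc n)) (Z n))" for n
    unfolding Z_def by simp_all
  have "Z n < Z (Suc n)" for n using pick[of "max (b (Suc n)) (Z n)"] Z_Suc[of n] by simp
  then have "strict_mono Z" by (rule strict_mono_Suc_iff[THEN iffD2, rule_format])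
  moreover have "Z n \<in> N \<and> b n < Z n" for n
  proof (cases n)
    case 0
    then show ?thesis using pick Z_0 by simp
  next
    case (Suc m)
    then show ?thesis using pick[of "max (b (Suc m)) (Z m)"] Z_Suc[of m] by simp
  qed
  ultimately show ?thesis by blast
qed

lemma restr_map_prod_image_iff:
  assumes "inj \<iota>" and "a \<in> A" and "b \<in> A"
  shows "(\<iota> a, \<iota> b) \<in> restr (map_prod \<iota> \<iota> ` r) (\<iota> ` A) \<longleftrightarrow> (a, b) \<in> restr r A"
  using assms unfolding restr_def by (auto simp: inj_eq)

lemma order_type_omega_image:
  assumes "order_type_omega A (restr r A)" and "inj \<iota>"
  shows "order_type_omega (\<iota> ` A) (restr (map_prod \<iota> \<iota> ` r) (\<iota> ` A))"
proof -
  obtain g :: "nat \<Rightarrow> 'a" where g: "bij_betw g UNIV A" "\<forall>m n. (g m, g n) \<in> restr r A \<longleftrightarrow> m \<le> n"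
    using assms(1) unfolding order_type_omega_def by blast
  have "bij_betw \<iota> A (\<iota> ` A)" using assms(2) by (simp add: bij_betw_imageI inj_on_subset)
  then have "bij_betw (\<iota> \<circ> g) UNIV (\<iota> ` A)" by (rule bij_betw_trans[OF g(1)])
  moreover have "g m \<in> A" for m using g(1) by (auto simp: bij_betw_def)
  ultimately show ?thesis
    unfolding order_type_omega_def using g(2) restr_map_prod_image_iff[OF assms(2)]
    by (intro exI[of _ "\<iota> \<circ> g"]) simp
qed

lemma not_order_scattered_image:
  assumes "\<not> order_scattered A (restr r A)" and "inj \<iota>"
  shows "\<not> order_scattered (\<iota> ` A) (restr (map_prod \<iota> \<iota> ` r) (\<iota> ` A))"
proof -
  obtain H :: "rat \<Rightarrow> 'a" where H: "range H \<subseteq> A" "inj H" "\<forall>p q. p \<le> q \<longleftrightarrow> (H p, H q) \<in> restr r A"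
    using assms(1) unfolding order_scattered_def by blast
  have "range (\<iota> \<circ> H) \<subseteq> \<iota> ` A" "inj (\<iota> \<circ> H)" using H assms(2) by (auto simp: inj_compose)
  moreover have "p \<le> q \<longleftrightarrow> ((\<iota> \<circ> H) p, (\<iota> \<circ> H) q) \<in> restr (map_prod \<iota> \<iota> ` r) (\<iota> ` A)" for p q
    using H restr_map_prod_image_iff[OF assms(2), of "H p" A "H q" r] by auto
  ultimately show ?thesis unfolding order_scattered_def by blast
qed

lemma map_prod_fiber_subset:
  assumes "inj \<iota>1"
  shows "({\<iota>1 y} \<times> \<iota>2 ` snd ` T) \<inter> map_prod \<iota>1 \<iota>2 ` T \<subseteq> map_prod \<iota>1 \<iota>2 ` (({y} \<times> snd ` T) \<inter> T)"
proof
  fix z assume "z \<in> ({\<iota>1 y} \<times> \<iota>2 ` snd ` T) \<inter> map_prod \<iota>1 \<iota>2 ` T"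
  then obtain a b where "(a, b) \<in> T" "z = (\<iota>1 a, \<iota>2 b)" "\<iota>1 a = \<iota>1 y" by auto
  with assms show "z \<in> map_prod \<iota>1 \<iota>2 ` (({y} \<times> snd ` T) \<inter> T)" by (force simp: inj_eq)
qed

lemma chain_product_rep_image:
  assumes rep: "chain_product_rep S s Y1 t1 Y2 t2 e" and i1: "inj \<iota>1" and i2: "inj \<iota>2"
  shows "chain_product_rep S s (\<iota>1 ` Y1) (map_prod \<iota>1 \<iota>1 ` t1) (\<iota>2 ` Y2) (map_prod \<iota>2 \<iota>2 ` t2)
           (map_prod \<iota>1 \<iota>2 \<circ> e)"
proof -
  define M where "M = map_prod \<iota>1 \<iota>2"
  define T where "T = e ` S"
  have c1: "chain_on Y1 t1" and c2: "chain_on Y2 t2"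
    and je: "join_embedding S s (Y1 \<times> Y2) (prod_order t1 t2) e"
    and ot: "order_type_omega (fst ` T) (restr t1 (fst ` T))"
    and ns: "\<not> order_scattered (snd ` T) (restr t2 (snd ` T))"
    and fib: "\<And>x. x \<in> fst ` T \<Longrightarrow> finite (({x} \<times> snd ` T) \<inter> T)"
    using rep unfolding chain_product_rep_def T_def Let_def by auto
  have "bij_betw M (Y1 \<times> Y2) (\<iota>1 ` Y1 \<times> \<iota>2 ` Y2)"
    unfolding M_def bij_betw_def using i1 i2 by (auto simp: inj_on_def map_prod_surj_on)
  moreover have "(u, v) \<in> prod_order t1 t2 \<longleftrightarrow>
      (M u, M v) \<in> prod_order (map_prod \<iota>1 \<iota>1 ` t1) (map_prod \<iota>2 \<iota>2 ` t2)" for u v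
    using i1 i2 unfolding M_def by (cases u; cases v) (auto simp: prod_order_iff inj_eq)
  ultimately have "join_embedding S s (\<iota>1 ` Y1 \<times> \<iota>2 ` Y2)
      (prod_order (map_prod \<iota>1 \<iota>1 ` t1) (map_prod \<iota>2 \<iota>2 ` t2)) (M \<circ> e)"
    using join_embedding_comp[OF je join_embedding_bij_betw] by blast
  moreover have "fst ` (M \<circ> e) ` S = \<iota>1 ` fst ` T" "snd ` (M \<circ> e) ` S = \<iota>2 ` snd ` T"
    "(M \<circ> e) ` S = M ` T"
    unfolding M_def T_def by (auto simp: image_image)
  moreover have "\<forall>x\<in>\<iota>1 ` fst ` T. finite (({x} \<times> \<iota>2 ` snd ` T) \<inter> M ` T)"
  proof
    fix x assume "x \<in> \<iota>1 ` fst ` T"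
    then obtain y where "y \<in> fst ` T" "x = \<iota>1 y" by (auto simp only: image_iff)
    then show "finite (({x} \<times> \<iota>2 ` snd ` T) \<inter> M ` T)"
      using map_prod_fiber_subset[OF i1, of y \<iota>2 T] fib[of y] unfolding M_def
      by (meson finite_imageI finite_subset)
  qed
  ultimately show ?thesis
    unfolding chain_product_rep_def Let_def M_def[symmetric]
    using chain_on_image[OF c1 i1] chain_on_image[OF c2 i2] order_type_omega_image[OF ot i1]
      not_order_scattered_image[OF ns i2] by (simp only:) blast
qed

section \<open>Coding the compact sets of a bichain\<close>

locale omega_bichain =
  fixes X :: "'x set" and q1 q2 :: "('x \<times> 'x) set" and g :: "nat \<Rightarrow> 'x"
  assumes chain1: "chain_on X q1" and chain2: "chain_on X q2" and g_bij: "bij_betw g UNIV X"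
    and g_le1: "\<And>m n. (g m, g n) \<in> q1 \<longleftrightarrow> m \<le> n"
begin

definition le2 :: "nat \<Rightarrow> nat \<Rightarrow> bool" where
  "le2 i j \<longleftrightarrow> (g i, g j) \<in> q2"

definition le2_bot :: "(nat \<times> nat) set" where
  "le2_bot = {(a, b). a = 0 \<or> (0 < a \<and> 0 < b \<and> le2 (a - 1) (b - 1))}"

text \<open>A nonempty compact set of \<open>C(B)\<close> is the set below \<open>g i\<close> in the first order and below \<open>g j\<close>
  in the second, where \<open>g i\<close> and \<open>g j\<close> are its maxima for the two orders; the code
  \<open>(Suc i, Suc j)\<close> records these maxima and \<open>(0, 0)\<close> codes the empty set.\<close>

definition codes :: "(nat \<times> nat) set" where
  "codes = {(0, 0)} \<union> {(Suc i, Suc j) | i j. j \<le> i \<and> le2 i j}"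

abbreviation codes_order :: "((nat \<times> nat) \<times> (nat \<times> nat)) set" where
  "codes_order \<equiv> restr (prod_order natLeq le2_bot) codes"

definition down_set :: "'x \<Rightarrow> 'x \<Rightarrow> 'x set" where
  "down_set a b = {y \<in> X. (y, a) \<in> q1 \<and> (y, b) \<in> q2}"

definition code_compact :: "nat \<times> nat \<Rightarrow> 'x set" where
  "code_compact u = (if fst u = 0 then {} else down_set (g (fst u - 1)) (g (snd u - 1)))"

lemma g_in: "g i \<in> X"
  using g_bij by (auto simp: bij_betw_def)

lemma g_eq_iff: "g i = g j \<longleftrightarrow> i = j"
  using g_bij by (auto simp: bij_betw_def dest: injD)

lemma ex_g: "x \<in> X \<Longrightarrow> \<exists>i. x = g i"
  using g_bij by (auto simp: bij_betw_def)

lemma le2_refl: "le2 i i"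
  unfolding le2_def using chain_on_refl[OF chain2 g_in] .

lemma le2_trans: "le2 i j \<Longrightarrow> le2 j k \<Longrightarrow> le2 i k"
  unfolding le2_def using chain_on_trans[OF chain2] by blast

lemma le2_antisym: "le2 i j \<Longrightarrow> le2 j i \<Longrightarrow> i = j"
  unfolding le2_def using chain_on_antisym[OF chain2] g_eq_iff by blast

lemma le2_total: "le2 i j \<or> le2 j i"
  unfolding le2_def using chain_on_total[OF chain2 g_in g_in] .

lemma le2_bot_simps [simp]:
  "(0, b) \<in> le2_bot" "(Suc i, 0) \<notin> le2_bot" "(Suc i, Suc j) \<in> le2_bot \<longleftrightarrow> le2 i j"
  unfolding le2_bot_def by auto

lemma le2_bot_iff: "(a, b) \<in> le2_bot \<longleftrightarrow> a = 0 \<or> (\<exists>i j. a = Suc i \<and> b = Suc j \<and> le2 i j)"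
  unfolding le2_bot_def by (cases a; cases b) auto

lemma chain_on_le2_bot: "chain_on UNIV le2_bot"
proof (rule chain_onI)
  show "(a, a) \<in> le2_bot" for a using le2_refl by (cases a) auto
  show "(a, c) \<in> le2_bot" if "(a, b) \<in> le2_bot" "(b, c) \<in> le2_bot" for a b c
    using that le2_trans unfolding le2_bot_iff by fastforce
  show "a = b" if "(a, b) \<in> le2_bot" "(b, a) \<in> le2_bot" for a b
    using that le2_antisym unfolding le2_bot_iff by fastforce
  show "(a, b) \<in> le2_bot \<or> (b, a) \<in> le2_bot" for a b
    using le2_total by (cases a; cases b) auto
qed simp

lemma chain_max_le2_bot_0 [simp]: "chain_max le2_bot 0 b = b" "chain_max le2_bot a 0 = a"
  unfolding chain_max_def le2_bot_def by auto

lemma chain_max_le2_bot_Suc [simp]: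
  "chain_max le2_bot (Suc i) (Suc j) = Suc (if le2 i j then j else i)"
  unfolding chain_max_def by simp

lemma codes_iff: "u \<in> codes \<longleftrightarrow> u = (0, 0) \<or> (\<exists>i j. u = (Suc i, Suc j) \<and> j \<le> i \<and> le2 i j)"
  unfolding codes_def by auto

lemma codes_cases:
  assumes "u \<in> codes"
  obtains "u = (0, 0)" | i j where "u = (Suc i, Suc j)" "j \<le> i" "le2 i j"
  using assms unfolding codes_iff by blast

lemma codes_snd_le_fst: "u \<in> codes \<Longrightarrow> snd u \<le> fst u"
  unfolding codes_iff by auto

lemma diagonal_in_codes: "(Suc i, Suc i) \<in> codes"
  unfolding codes_iff using le2_refl by auto

lemma infinite_codes: "infinite codes"
proof -
  have "inj (\<lambda>i. (Suc i, Suc i))" by (auto simp: inj_def)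
  then have "infinite (range (\<lambda>i. (Suc i, Suc i)))" by (rule range_inj_infinite)
  moreover have "range (\<lambda>i. (Suc i, Suc i)) \<subseteq> codes" using diagonal_in_codes by blast
  ultimately show ?thesis using finite_subset by blast
qed

lemma join_closed_codes: "join_closed natLeq le2_bot codes"
  unfolding join_closed_def
proof (intro ballI)
  fix u v assume u: "u \<in> codes" and v: "v \<in> codes"
  show "prod_join natLeq le2_bot u v \<in> codes"
  proof (cases "u = (0, 0) \<or> v = (0, 0)")
    case True
    then show ?thesis using u v by (auto simp: prod_join_def chain_max_natLeq)
  next
    case False
    then obtain i j i' j' where u': "u = (Suc i, Suc j)" "j \<le> i" "le2 i j"
      and v': "v = (Suc i', Suc j')" "j' \<le> i'" "le2 i' j'"
      using u v unfolding codes_iff by blast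
    define m where "m = (if le2 j j' then j' else j)"
    have "m \<le> max i i'" unfolding m_def using u' v' by auto
    moreover have "le2 j m" "le2 j' m" unfolding m_def using le2_refl le2_total by auto
    then have "le2 (max i i') m" using u' v' le2_trans by (cases "i \<le> i'") (auto simp: max_def)
    ultimately show ?thesis
      using u' v' unfolding codes_iff by (simp add: prod_join_def chain_max_natLeq m_def)
  qed
qed

abbreviation closure :: "'x set \<Rightarrow> 'x set" where
  "closure A \<equiv> bichain_closure X q1 q2 A"

lemma closure_least: "bichain_closed X q1 q2 C \<Longrightarrow> A \<subseteq> C \<Longrightarrow> closure A \<subseteq> C"
  unfolding bichain_closure_def by blast

lemma bichain_closed_down_set: "a \<in> X \<Longrightarrow> b \<in> X \<Longrightarrow> bichain_closed X q1 q2 (down_set a b)"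
  unfolding bichain_closed_def
proof (intro exI conjI)
  show "initial_segment X q1 {y \<in> X. (y, a) \<in> q1}"
    unfolding initial_segment_def using chain_on_trans[OF chain1] by blast
  show "initial_segment X q2 {y \<in> X. (y, b) \<in> q2}"
    unfolding initial_segment_def using chain_on_trans[OF chain2] by blast
qed (auto simp: down_set_def)

lemma closure_empty: "closure {} = {}"
proof -
  have "bichain_closed X q1 q2 {}" unfolding bichain_closed_def initial_segment_def by blast
  then show ?thesis using closure_least by blast
qed

lemma closure_down_set: "closure (down_set (g i) (g j)) = down_set (g i) (g j)"
  using closure_least[OF bichain_closed_down_set[OF g_in g_in] subset_refl]
  unfolding bichain_closure_def by blast

lemma g_mem_down_set: "g m \<in> down_set (g i) (g j) \<longleftrightarrow> m \<le> i \<and> le2 m j"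
  unfolding down_set_def le2_def using g_in g_le1 by auto

lemma finite_down_set: "finite (down_set (g i) (g j))"
proof -
  have "down_set (g i) (g j) \<subseteq> g ` {..i}"
    using ex_g g_mem_down_set unfolding down_set_def by blast
  then show ?thesis using finite_subset by blast
qed

lemma code_compact_in_compacts: "code_compact u \<in> compacts X q1 q2"
proof (cases "fst u = 0")
  case True
  then show ?thesis using closure_empty unfolding compacts_def code_compact_def by auto
next
  case False
  define D where "D = down_set (g (fst u - 1)) (g (snd u - 1))"
  have "code_compact u = closure D" "finite D" "D \<subseteq> X"
    using False closure_down_set finite_down_set unfolding code_compact_def D_def down_set_def
    by auto
  then show ?thesis unfolding compacts_def by blast
qed

lemma code_compact_Suc: "code_compact (Suc i, Suc j) = down_set (g i) (g j)"
  unfolding code_compact_def by simp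

lemma code_compact_subset_iff:
  assumes u: "u \<in> codes" and v: "v \<in> codes"
  shows "code_compact u \<subseteq> code_compact v \<longleftrightarrow> (u, v) \<in> prod_order natLeq le2_bot"
proof (cases "u = (0, 0)")
  case True
  then show ?thesis by (cases v) (simp add: code_compact_def prod_order_iff natLeq_def)
next
  case False
  then obtain i j where u': "u = (Suc i, Suc j)" "j \<le> i" "le2 i j" using u codes_iff by blast
  have max_in: "g i \<in> code_compact u" "g j \<in> code_compact u"
    using u' by (auto simp: code_compact_Suc g_mem_down_set le2_refl)
  show ?thesis
  proof (cases "v = (0, 0)")
    case True
    then show ?thesis using max_in u' by (auto simp: code_compact_def prod_order_iff)
  next
    case False
    then obtain i' j' where v': "v = (Suc i', Suc j')" using v codes_iff by blast
    show ?thesis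
    proof
      assume "code_compact u \<subseteq> code_compact v"
      then have "i \<le> i'" "le2 j j'"
        using max_in v' by (auto simp: code_compact_Suc g_mem_down_set)
      then show "(u, v) \<in> prod_order natLeq le2_bot"
        using u' v' by (simp add: prod_order_iff natLeq_def)
    next
      assume "(u, v) \<in> prod_order natLeq le2_bot"
      then have "(g i, g i') \<in> q1" "(g j, g j') \<in> q2"
        using u' v' by (auto simp: prod_order_iff natLeq_def g_le1 le2_def)
      then show "code_compact u \<subseteq> code_compact v"
        unfolding u' v' code_compact_Suc down_set_def
        using chain_on_trans[OF chain1] chain_on_trans[OF chain2] by blast
    qed
  qed
qed

lemma closure_eq_down_set:
  assumes F: "F \<subseteq> X" and a: "g a \<in> F" and b: "g b \<in> F" and max: "\<And>m. g m \<in> F \<Longrightarrow> m \<le> a \<and> le2 m b"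
  shows "closure F = down_set (g a) (g b)"
proof
  have "F \<subseteq> down_set (g a) (g b)"
    using F max ex_g g_mem_down_set by blast
  then show "closure F \<subseteq> down_set (g a) (g b)"
    using closure_least[OF bichain_closed_down_set[OF g_in g_in]] by blast
  show "down_set (g a) (g b) \<subseteq> closure F"
    unfolding bichain_closure_def
  proof (intro subsetI InterI, elim CollectE conjE)
    fix y C assume y: "y \<in> down_set (g a) (g b)" and "bichain_closed X q1 q2 C" and "F \<subseteq> C"
    then obtain I1 I2 where "initial_segment X q1 I1" "initial_segment X q2 I2" "C = I1 \<inter> I2"
      "g a \<in> I1" "g b \<in> I2"
      unfolding bichain_closed_def using a b by blast
    then show "y \<in> C" using y unfolding down_set_def initial_segment_def by blast
  qed
qed

lemma compacts_eq_code_compact: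
  assumes "C \<in> compacts X q1 q2"
  shows "\<exists>u\<in>codes. C = code_compact u"
proof -
  obtain F where F: "C = closure F" "finite F" "F \<subseteq> X" using assms unfolding compacts_def by blast
  show ?thesis
  proof (cases "F = {}")
    case True
    then show ?thesis using F closure_empty by (auto simp: codes_def code_compact_def)
  next
    case False
    define I where "I = {m. g m \<in> F}"
    have "F = g ` I" using F(3) ex_g unfolding I_def by blast
    then have I: "finite I" "I \<noteq> {}" using F(2) False g_eq_iff
        by (auto simp: finite_image_iff inj_on_def)
    define a where "a = Max I"
    have a: "a \<in> I" "\<And>m. m \<in> I \<Longrightarrow> m \<le> a" unfolding a_def using I by auto
    have "\<exists>b\<in>I. \<forall>m\<in>I. m = b \<or> (le2 m b \<and> m \<noteq> b)"
    proof (rule finite_has_greatest_wrt[OF I subset_UNIV])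
      show "le2 x z \<and> x \<noteq> z" if "le2 x y \<and> x \<noteq> y" "le2 y z \<and> y \<noteq> z" for x y z
        using that le2_trans le2_antisym by metis
      show "le2 x y \<and> x \<noteq> y \<or> le2 y x \<and> y \<noteq> x" if "x \<noteq> y" for x y
        using that le2_total by blast
    qed
    then obtain b where b: "b \<in> I" "\<And>m. m \<in> I \<Longrightarrow> le2 m b" using le2_refl by metis
    have "(Suc a, Suc b) \<in> codes" using a b unfolding codes_iff by blast
    moreover have "C = down_set (g a) (g b)"
      using closure_eq_down_set[OF F(3)] a b F(1) unfolding I_def by blast
    ultimately show ?thesis using code_compact_Suc by metis
  qed
qed

lemma codes_order_isomorphic_compacts:
  "order_isomorphic codes codes_order (compacts X q1 q2) (compacts_order X q1 q2)"
  unfolding order_isomorphic_def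
proof (intro exI conjI ballI)
  have "inj_on code_compact codes"
    using code_compact_subset_iff prod_order_antisym[OF chain_on_natLeq chain_on_le2_bot]
    by (intro inj_onI) blast
  then show "bij_betw code_compact codes (compacts X q1 q2)"
    unfolding bij_betw_def using code_compact_in_compacts compacts_eq_code_compact by blast
  show "(u, v) \<in> codes_order \<longleftrightarrow> (code_compact u, code_compact v) \<in> compacts_order X q1 q2"
    if "u \<in> codes" "v \<in> codes" for u v
    unfolding restr_def compacts_order_def
      using that code_compact_subset_iff code_compact_in_compacts
    by auto
qed

definition lt2_bot :: "nat \<Rightarrow> nat \<Rightarrow> bool" where
  "lt2_bot a b \<longleftrightarrow> (a, b) \<in> le2_bot \<and> a \<noteq> b"

lemma lt2_bot_trans: "lt2_bot a b \<Longrightarrow> lt2_bot b c \<Longrightarrow> lt2_bot a c"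
  unfolding lt2_bot_def
    using chain_on_trans[OF chain_on_le2_bot] chain_on_antisym[OF chain_on_le2_bot]
  by blast

lemma lt2_bot_irrefl: "\<not> lt2_bot a a"
  unfolding lt2_bot_def by simp

lemma lt2_bot_total: "a \<noteq> b \<Longrightarrow> lt2_bot a b \<or> lt2_bot b a"
  unfolding lt2_bot_def using chain_on_total[OF chain_on_le2_bot] by blast

lemma le2_bot_lt2_bot_trans: "(a, b) \<in> le2_bot \<Longrightarrow> lt2_bot b c \<Longrightarrow> lt2_bot a c"
  unfolding lt2_bot_def
    using chain_on_trans[OF chain_on_le2_bot] chain_on_antisym[OF chain_on_le2_bot]
  by blast

lemma not_le2_bot_iff: "(a, b) \<notin> le2_bot \<longleftrightarrow> lt2_bot b a"
  unfolding lt2_bot_def using chain_on_total[OF chain_on_le2_bot, of a b]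
    chain_on_refl[OF chain_on_le2_bot, of a] chain_on_antisym[OF chain_on_le2_bot, of a b] by auto

lemma infinite_fst_image_codes:
  assumes "T \<subseteq> codes" and "infinite T"
  shows "infinite (fst ` T)"
proof
  assume fin: "finite (fst ` T)"
  have "T \<subseteq> fst ` T \<times> {..Max (fst ` T)}"
  proof
    fix t assume t: "t \<in> T"
    then have "snd t \<le> fst t" "fst t \<le> Max (fst ` T)" using assms(1) codes_snd_le_fst fin by auto
    then show "t \<in> fst ` T \<times> {..Max (fst ` T)}" using t by (cases t) force
  qed
  then show False using assms(2) fin finite_subset by blast
qed

lemma finite_fiber_codes: "T \<subseteq> codes \<Longrightarrow> finite (({x} \<times> B) \<inter> T)"
proof -
  assume "T \<subseteq> codes"
  then have "({x} \<times> B) \<inter> T \<subseteq> {x} \<times> {..x}" using codes_snd_le_fst by fastforce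
  then show ?thesis using finite_subset by blast
qed

lemma join_embedding_codes_prod_join:
  assumes "join_embedding codes codes_order codes codes_order \<phi>" and "u \<in> codes" and "v \<in> codes"
  shows "\<phi> (prod_join natLeq le2_bot u v) = prod_join natLeq le2_bot (\<phi> u) (\<phi> v)"
  using join_embedding_join_closed_prod_join[OF chain_on_natLeq chain_on_le2_bot _ join_closed_codes
      chain_on_natLeq chain_on_le2_bot _ join_closed_codes assms] by simp

end

section \<open>Self-embeddings of the codes\<close>

locale omega_bichain_rat = omega_bichain X q1 q2 g for X :: "'x set" and q1 q2 g +
  fixes h :: "rat \<Rightarrow> 'x"
  assumes h_in: "\<And>p. h p \<in> X" and h_le2: "\<And>p q. p \<le> q \<longleftrightarrow> (h p, h q) \<in> q2"
begin

definition rat_index :: "rat \<Rightarrow> nat" where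
  "rat_index p = inv g (h p)"

lemma g_rat_index: "g (rat_index p) = h p"
  unfolding rat_index_def using h_in g_bij by (simp add: bij_betw_inv_into_right)

lemma le2_rat_index_iff: "le2 (rat_index p) (rat_index q) \<longleftrightarrow> p \<le> q"
  unfolding le2_def g_rat_index using h_le2 by simp

lemma inj_rat_index: "inj rat_index"
  by (rule injI) (metis le2_rat_index_iff le2_refl order_antisym)

lemma rat_index_less: "p < q \<Longrightarrow> le2 (rat_index p) (rat_index q) \<and> rat_index p \<noteq> rat_index q"
  using le2_rat_index_iff inj_rat_index by (metis inj_eq less_imp_le order_less_irrefl)

lemma exists_rat_index_large:
  assumes "\<And>N. finite {x. w x \<le> (N :: nat)}" and "p < q"
  shows "\<exists>r. p < r \<and> r < q \<and> N < rat_index r \<and> N < w (rat_index r)"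
proof -
  have "infinite (rat_index ` {p<..<q})"
    using assms(2) by (simp add: finite_image_iff inj_on_subset[OF inj_rat_index])
  moreover have "finite ({..N} \<union> {x. w x \<le> N})" using assms(1) by simp
  ultimately obtain x where "x \<in> rat_index ` {p<..<q}" "x \<notin> {..N} \<union> {x. w x \<le> N}"
    by (meson finite_subset subsetI)
  then show ?thesis by auto
qed

end

text \<open>Writing \<open>\<phi> (Suc x, Suc x) = (\<alpha> x, \<beta> x)\<close>, the join of two diagonal codes whose indices
  are ordered oppositely by the two orders is a third code, so their images are incomparable; as
  \<open>\<alpha>\<close> is finite-to-one, this forces \<open>\<beta>\<close> to copy the rationals.\<close>

locale codes_self_embedding = omega_bichain_rat +
  fixes \<phi> :: "nat \<times> nat \<Rightarrow> nat \<times> nat"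
  assumes \<phi>_codes: "\<And>u. u \<in> codes \<Longrightarrow> \<phi> u \<in> codes"
    and inj_\<phi>: "inj_on \<phi> codes"
    and \<phi>_join: "\<And>u v. u \<in> codes \<Longrightarrow> v \<in> codes \<Longrightarrow>
        \<phi> (prod_join natLeq le2_bot u v) = prod_join natLeq le2_bot (\<phi> u) (\<phi> v)"
begin

definition \<alpha> :: "nat \<Rightarrow> nat" where "\<alpha> x = fst (\<phi> (Suc x, Suc x))"
definition \<beta> :: "nat \<Rightarrow> nat" where "\<beta> x = snd (\<phi> (Suc x, Suc x))"

lemma \<phi>_diagonal: "\<phi> (Suc x, Suc x) = (\<alpha> x, \<beta> x)"
  unfolding \<alpha>_def \<beta>_def by simp

lemma finite_\<alpha>_le: "finite {x. \<alpha> x \<le> N}"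
proof -
  have "inj (\<lambda>x. \<phi> (Suc x, Suc x))"
    using inj_onD[OF inj_\<phi> _ diagonal_in_codes diagonal_in_codes] by (auto intro: injI)
  then have "finite ((\<lambda>x. \<phi> (Suc x, Suc x)) -` ({..N} \<times> {..N}))"
    by (intro finite_vimageI) simp_all
  moreover have "\<beta> x \<le> \<alpha> x" for x
    using codes_snd_le_fst[OF \<phi>_codes[OF diagonal_in_codes[of x]]] \<phi>_diagonal[of x] by simp
  then have "{x. \<alpha> x \<le> N} \<subseteq> (\<lambda>x. \<phi> (Suc x, Suc x)) -` ({..N} \<times> {..N})"
    using \<phi>_diagonal by (auto intro: order.trans)
  ultimately show ?thesis using finite_subset by blast
qed

lemma \<beta>_mono: "x \<le> y \<Longrightarrow> le2 x y \<Longrightarrow> (\<beta> x, \<beta> y) \<in> le2_bot"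
proof -
  assume "x \<le> y" "le2 x y"
  then have "\<phi> (Suc y, Suc y) = prod_join natLeq le2_bot (\<phi> (Suc x, Suc x)) (\<phi> (Suc y, Suc y))"
    using \<phi>_join[OF diagonal_in_codes diagonal_in_codes, of x y]
    by (simp add: prod_join_def chain_max_natLeq max_def)
  moreover have "(\<phi> (Suc x, Suc x), prod_join natLeq le2_bot (\<phi> (Suc x, Suc x)) (\<phi> (Suc y, Suc y)))
      \<in> prod_order natLeq le2_bot"
    by (rule prod_join_upper1[OF chain_on_natLeq chain_on_le2_bot]) simp_all
  ultimately show ?thesis by (simp add: \<phi>_diagonal prod_order_iff)
qed

lemma crossed_diagonal_images:
  assumes "y < x" and "le2 x y"
  shows "(\<alpha> x < \<alpha> y \<and> lt2_bot (\<beta> y) (\<beta> x)) \<or> (\<alpha> y < \<alpha> x \<and> lt2_bot (\<beta> x) (\<beta> y))"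
proof -
  have w: "(Suc x, Suc y) \<in> codes" using assms unfolding codes_iff by auto
  have "prod_join natLeq le2_bot (Suc x, Suc x) (Suc y, Suc y) = (Suc x, Suc y)"
    using assms by (simp add: prod_join_def chain_max_natLeq)
  then have \<phi>w: "\<phi> (Suc x, Suc y) = (max (\<alpha> x) (\<alpha> y), chain_max le2_bot (\<beta> x) (\<beta> y))"
    using \<phi>_join[OF diagonal_in_codes diagonal_in_codes, of x y]
    by (simp add: prod_join_def chain_max_natLeq \<phi>_diagonal)
  have "\<phi> (Suc x, Suc y) \<noteq> \<phi> (Suc x, Suc x)" "\<phi> (Suc x, Suc y) \<noteq> \<phi> (Suc y, Suc y)"
    using assms(1) by (simp_all add: inj_on_eq_iff[OF inj_\<phi> w diagonal_in_codes])
  then have n1: "\<not> (\<alpha> y \<le> \<alpha> x \<and> (\<beta> y, \<beta> x) \<in> le2_bot)"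
    and n2: "\<not> (\<alpha> x \<le> \<alpha> y \<and> (\<beta> x, \<beta> y) \<in> le2_bot)"
    unfolding \<phi>w \<phi>_diagonal
    using chain_max_eq_left[OF chain_on_le2_bot, of "\<beta> y" "\<beta> x"] chain_max_eq_right[of "\<beta> x" "\<beta> y"]
    by (auto simp: max_def)
  show ?thesis
  proof (cases "\<alpha> x \<le> \<alpha> y")
    case True
    then have "lt2_bot (\<beta> y) (\<beta> x)" using n2 not_le2_bot_iff by blast
    then show ?thesis using True n1 unfolding lt2_bot_def by fastforce
  next
    case False
    then show ?thesis using n1 not_le2_bot_iff by auto
  qed
qed

lemma \<beta>_rat_index_reversed:
  assumes "r < p" and "rat_index p < rat_index r" and "\<alpha> (rat_index p) < \<alpha> (rat_index r)"
  shows "lt2_bot (\<beta> (rat_index r)) (\<beta> (rat_index p))"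
  using crossed_diagonal_images[of "rat_index p" "rat_index r"] rat_index_less[OF assms(1)]
    assms(2,3)
  by auto

lemma \<beta>_rat_index_less_imp_less:
  assumes lt: "lt2_bot (\<beta> (rat_index p)) (\<beta> (rat_index p'))"
  shows "p < p'"
proof (rule ccontr)
  assume "\<not> p < p'"
  moreover have "p \<noteq> p'" using lt lt2_bot_irrefl by auto
  ultimately have "p' < p" by simp
  then obtain r where r: "p' < r" "r < p" "max (rat_index p) (rat_index p') < rat_index r"
      "\<alpha> (rat_index p) < \<alpha> (rat_index r)"
    using exists_rat_index_large[OF finite_\<alpha>_le \<open>p' < p\<close>,
        of "max (max (rat_index p) (rat_index p')) (\<alpha> (rat_index p))"] by auto
  then have "lt2_bot (\<beta> (rat_index r)) (\<beta> (rat_index p))" by (intro \<beta>_rat_index_reversed) auto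
  moreover have "(\<beta> (rat_index p'), \<beta> (rat_index r)) \<in> le2_bot"
    using \<beta>_mono rat_index_less[OF r(1)] r(3) by simp
  ultimately have "lt2_bot (\<beta> (rat_index p')) (\<beta> (rat_index p))"
      by (rule le2_bot_lt2_bot_trans[rotated])
  then show False using lt lt2_bot_trans lt2_bot_irrefl by blast
qed

lemma \<beta>_rat_index_dense:
  assumes lt: "lt2_bot (\<beta> (rat_index p)) (\<beta> (rat_index p'))"
  shows "\<exists>c\<in>range rat_index. lt2_bot (\<beta> (rat_index p)) (\<beta> c) \<and> lt2_bot (\<beta> c) (\<beta> (rat_index p'))"
proof -
  let ?a = "rat_index p" and ?b = "rat_index p'"
  have "p < p'" using lt by (rule \<beta>_rat_index_less_imp_less)
  then obtain r2 where r2: "p < r2" "r2 < p'" "max ?a ?b < rat_index r2" "\<alpha> ?b < \<alpha> (rat_index r2)"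
    using exists_rat_index_large[OF finite_\<alpha>_le, of p p' "max (max ?a ?b) (\<alpha> ?b)"] by auto
  obtain r1 where r1: "p < r1" "r1 < r2" "rat_index r2 < rat_index r1"
      "\<alpha> (rat_index r2) < \<alpha> (rat_index r1)"
    using exists_rat_index_large[OF finite_\<alpha>_le r2(1), of "max (rat_index r2) (\<alpha> (rat_index r2))"]
    by auto
  have above: "lt2_bot (\<beta> (rat_index r2)) (\<beta> ?b)"
    using r2 by (intro \<beta>_rat_index_reversed) auto
  have "lt2_bot (\<beta> (rat_index r1)) (\<beta> (rat_index r2))"
    using r1 by (intro \<beta>_rat_index_reversed) auto
  moreover have "(\<beta> ?a, \<beta> (rat_index r1)) \<in> le2_bot"
    using \<beta>_mono rat_index_less[OF r1(1)] r1(3) r2(3) by simp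
  ultimately have "lt2_bot (\<beta> ?a) (\<beta> (rat_index r2))" by (rule le2_bot_lt2_bot_trans[rotated])
  then show ?thesis using above by blast
qed

lemma snd_image_has_rat_chain:
  "\<exists>H :: rat \<Rightarrow> nat. range H \<subseteq> snd ` \<phi> ` codes \<and> (\<forall>p q. p < q \<longrightarrow> lt2_bot (H p) (H q))"
proof -
  obtain r where r: "0 < r" "r < 1" "rat_index 1 < rat_index r" "\<alpha> (rat_index 1) < \<alpha> (rat_index r)"
    using exists_rat_index_large[OF finite_\<alpha>_le, of 0 1 "max (rat_index 1) (\<alpha> (rat_index 1))"]
    by auto
  have "\<exists>H'::rat \<Rightarrow> nat. range H' \<subseteq> range rat_index \<and> (\<forall>p q. p < q \<longrightarrow> lt2_bot (\<beta> (H' p)) (\<beta> (H' q)))"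
  proof (rule dense_order_has_rat_copy)
    show "lt2_bot (\<beta> (rat_index r)) (\<beta> (rat_index 1))" using r by (intro \<beta>_rat_index_reversed) auto
    show "\<exists>c\<in>range rat_index. lt2_bot (\<beta> a) (\<beta> c) \<and> lt2_bot (\<beta> c) (\<beta> b)"
      if "a \<in> range rat_index" "b \<in> range rat_index" "lt2_bot (\<beta> a) (\<beta> b)" for a b
      using that \<beta>_rat_index_dense by blast
  qed (use lt2_bot_trans lt2_bot_total in auto)
  then obtain H' :: "rat \<Rightarrow> nat" where "\<forall>p q. p < q \<longrightarrow> lt2_bot (\<beta> (H' p)) (\<beta> (H' q))" by blast
  moreover have "range (\<lambda>p. \<beta> (H' p)) \<subseteq> snd ` \<phi> ` codes"
    using diagonal_in_codes unfolding \<beta>_def by blast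
  ultimately show ?thesis by blast
qed

end

context omega_bichain_rat
begin

lemma chain_product_rep_if_equimorphic_codes:
  assumes "equimorphic S s codes codes_order"
  shows "\<exists>e. chain_product_rep S s UNIV natLeq UNIV le2_bot e"
proof -
  obtain e k where e: "join_embedding S s codes codes_order e"
    and k: "join_embedding codes codes_order S s k"
    using assms unfolding equimorphic_def by blast
  have \<phi>: "join_embedding codes codes_order codes codes_order (e \<circ> k)"
    using join_embedding_comp[OF k e] .
  interpret codes_self_embedding X q1 q2 g h "e \<circ> k"
    by unfold_locales
      (use \<phi> join_embedding_codes_prod_join[OF \<phi>] in \<open>auto simp: join_embedding_def\<close>)
  obtain H :: "rat \<Rightarrow> nat" where H: "range H \<subseteq> snd ` (e \<circ> k) ` codes"
    "\<And>p q. p < q \<Longrightarrow> lt2_bot (H p) (H q)"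
    using snd_image_has_rat_chain by blast
  define T where "T = e ` S"
  have T_codes: "T \<subseteq> codes" using e unfolding join_embedding_def T_def by auto
  have image_sub: "(e \<circ> k) ` codes \<subseteq> T" using k unfolding T_def join_embedding_def by auto
  have "infinite ((e \<circ> k) ` codes)" using infinite_codes inj_\<phi> finite_imageD by blast
  then have "infinite (fst ` T)" using infinite_fst_image_codes[OF T_codes] image_sub infinite_super
      by blast
  moreover have "\<not> order_scattered (snd ` T) (restr le2_bot (snd ` T))"
  proof (rule not_order_scattered_if_rat_chain[OF chain_on_le2_bot subset_UNIV])
    show "range H \<subseteq> snd ` T" using H(1) image_sub by blast
    show "(H p, H q) \<in> le2_bot \<and> H p \<noteq> H q" if "p < q" for p q using H(2)[OF that]
        unfolding lt2_bot_def .
  qed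
  moreover have "join_embedding S s (UNIV \<times> UNIV) (prod_order natLeq le2_bot) e"
    by (rule join_embedding_join_closed_product[OF chain_on_natLeq chain_on_le2_bot _
          join_closed_codes e])
      simp
  ultimately have "chain_product_rep S s UNIV natLeq UNIV le2_bot e"
    unfolding chain_product_rep_def Let_def T_def[symmetric]
    using chain_on_natLeq chain_on_le2_bot order_type_omega_infinite_nat
      finite_fiber_codes[OF T_codes]
    by blast
  then show ?thesis by blast
qed

end

section \<open>Embedding a representation into the codes and back\<close>

locale rep_image = omega_bichain_rat X q1 q2 g h for X :: "'x set" and q1 q2 g h +
  fixes X1 :: "'b set" and r1 :: "('b \<times> 'b) set" and X2 :: "'c set" and r2 :: "('c \<times> 'c) set"
    and T :: "('b \<times> 'c) set" and \<gamma> :: "nat \<Rightarrow> 'b" and hA :: "rat \<Rightarrow> 'c"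
  assumes chain_X1: "chain_on X1 r1" and chain_X2: "chain_on X2 r2" and T_sub: "T \<subseteq> X1 \<times> X2"
    and join_closed_T: "join_closed r1 r2 T"
    and \<gamma>_bij: "bij_betw \<gamma> UNIV (fst ` T)" and \<gamma>_le: "\<And>m n. (\<gamma> m, \<gamma> n) \<in> r1 \<longleftrightarrow> m \<le> n"
    and finite_fiber: "\<And>x. x \<in> fst ` T \<Longrightarrow> finite (({x} \<times> snd ` T) \<inter> T)"
    and hA_in: "\<And>p. hA p \<in> snd ` T" and hA_le: "\<And>p q. p \<le> q \<longleftrightarrow> (hA p, hA q) \<in> r2"
begin

definition fiber :: "nat \<Rightarrow> 'c set" where
  "fiber n = {c. (\<gamma> n, c) \<in> T}"

lemma \<gamma>_eq_iff: "\<gamma> m = \<gamma> n \<longleftrightarrow> m = n"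
  using \<gamma>_bij by (auto simp: bij_betw_def dest: injD)

lemma T_iff: "t \<in> T \<longleftrightarrow> (\<exists>n c. t = (\<gamma> n, c) \<and> c \<in> fiber n)"
proof
  assume t: "t \<in> T"
  then have "fst t \<in> range \<gamma>" using \<gamma>_bij by (simp add: bij_betw_def)
  then obtain n where "fst t = \<gamma> n" by blast
  then show "\<exists>n c. t = (\<gamma> n, c) \<and> c \<in> fiber n"
    using t unfolding fiber_def
    by (intro exI[of _ n] exI[of _ "snd t"]) (metis prod.collapse mem_Collect_eq)
qed (auto simp: fiber_def)

lemma finite_fiber_n: "finite (fiber n)"
proof -
  have "\<gamma> n \<in> fst ` T" using \<gamma>_bij by (auto simp: bij_betw_def)
  moreover have "fiber n \<subseteq> snd ` (({\<gamma> n} \<times> snd ` T) \<inter> T)" unfolding fiber_def by force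
  ultimately show ?thesis using finite_fiber by (meson finite_imageI finite_subset)
qed

lemma snd_T_eq: "snd ` T = (\<Union>n. fiber n)"
  using T_iff by force

lemma snd_T_sub: "snd ` T \<subseteq> X2"
  using T_sub by auto

lemma countable_snd_T: "countable (snd ` T)"
  unfolding snd_T_eq by (intro countable_UN) (auto intro: countable_finite finite_fiber_n)

lemma inj_hA: "inj hA"
proof (rule injI)
  fix p q assume "hA p = hA q"
  moreover have "hA p \<in> X2" using hA_in snd_T_sub by blast
  ultimately show "p = q" using hA_le[of p q] hA_le[of q p] chain_on_refl[OF chain_X2] by force
qed

lemma hA_less: "p < q \<Longrightarrow> (hA p, hA q) \<in> r2 \<and> hA p \<noteq> hA q"
  using hA_le inj_hA by (metis inj_eq less_imp_le order_less_irrefl)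

lemma infinite_snd_T: "infinite (snd ` T)"
proof -
  have "infinite (range hA)" using inj_hA by (metis finite_imageD infinite_UNIV_char_0)
  moreover have "range hA \<subseteq> snd ` T" using hA_in by blast
  ultimately show ?thesis using finite_subset by blast
qed

lemma chain_max_\<gamma>: "chain_max r1 (\<gamma> m) (\<gamma> n) = \<gamma> (max m n)"
  unfolding chain_max_def using \<gamma>_le by (auto simp: max_def)

lemma prod_join_\<gamma>: "prod_join r1 r2 (\<gamma> m, c) (\<gamma> n, c') = (\<gamma> (max m n), chain_max r2 c c')"
  unfolding prod_join_def by (simp add: chain_max_\<gamma>)

lemma join_embedding_into_codes:
  assumes R_le2: "\<And>c c'. c \<in> snd ` T \<Longrightarrow> c' \<in> snd ` T \<Longrightarrow> (c, c') \<in> r2 \<longleftrightarrow> le2 (R c) (R c')"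
    and inj_R: "inj_on R (snd ` T)" and Z: "strict_mono Z"
    and Z_R: "\<And>n c. c \<in> fiber n \<Longrightarrow> R c < Z n \<and> le2 (Z n) (R c)"
  shows "\<exists>\<Phi>. join_embedding T (restr (prod_order r1 r2) T) codes codes_order \<Phi>"
proof -
  define \<Phi> where "\<Phi> t = (Suc (Z (inv \<gamma> (fst t))), Suc (R (snd t)))" for t
  have \<Phi>_\<gamma>: "\<Phi> (\<gamma> n, c) = (Suc (Z n), Suc (R c))" for n c
    unfolding \<Phi>_def using \<gamma>_eq_iff by (simp add: inv_f_f inj_def)
  have fiber_snd: "c \<in> fiber n \<Longrightarrow> c \<in> snd ` T" for n c unfolding fiber_def by force
  have "\<Phi> ` T \<subseteq> codes"
  proof (rule image_subsetI)
    fix t assume t: "t \<in> T"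
    obtain n c where "t = (\<gamma> n, c)" "c \<in> fiber n" using t unfolding T_iff by blast
    then show "\<Phi> t \<in> codes" using Z_R[of c n] unfolding codes_iff by (simp add: \<Phi>_\<gamma> less_imp_le)
  qed
  moreover have "inj_on \<Phi> T"
  proof (rule inj_onI)
    fix t t' assume "t \<in> T" "t' \<in> T" and eq: "\<Phi> t = \<Phi> t'"
    then obtain n c n' c' where t: "t = (\<gamma> n, c)" "c \<in> fiber n"
      and t': "t' = (\<gamma> n', c')" "c' \<in> fiber n'"
      unfolding T_iff by blast
    then have "Z n = Z n'" "R c = R c'" using eq by (simp_all add: \<Phi>_\<gamma>)
    then have "n = n'" "c = c'"
      using strict_mono_eq[OF Z] inj_onD[OF inj_R _ fiber_snd[OF t(2)] fiber_snd[OF t'(2)]] by auto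
    then show "t = t'" using t t' by simp
  qed
  moreover have "\<Phi> (prod_join r1 r2 t t') = prod_join natLeq le2_bot (\<Phi> t) (\<Phi> t')"
    if tt: "t \<in> T" "t' \<in> T" for t t'
  proof -
    obtain n c n' c' where t: "t = (\<gamma> n, c)" "c \<in> fiber n" and t': "t' = (\<gamma> n', c')" "c' \<in> fiber n'"
      using tt unfolding T_iff by blast
    have "R (chain_max r2 c c') = (if le2 (R c) (R c') then R c' else R c)"
      using R_le2[OF fiber_snd[OF t(2)] fiber_snd[OF t'(2)]] unfolding chain_max_def by simp
    moreover have "Z (max n n') = max (Z n) (Z n')"
      using strict_mono_less_eq[OF Z, of n n'] by (auto simp: max_def)
    ultimately show ?thesis
      unfolding t t' prod_join_\<gamma> \<Phi>_\<gamma> by (simp add: prod_join_def chain_max_natLeq)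
  qed
  ultimately have "join_embedding T (restr (prod_order r1 r2) T) codes codes_order \<Phi>"
    by (intro join_embedding_join_closedI[OF chain_X1 chain_X2 T_sub join_closed_T chain_on_natLeq
        chain_on_le2_bot _ join_closed_codes]) auto
  then show ?thesis by blast
qed

lemma infinite_negative_rat_indices: "infinite (rat_index ` {q. q < 0})"
proof
  assume "finite (rat_index ` {q. q < 0})"
  moreover have "inj_on rat_index {q. q < 0}" using inj_rat_index by (rule inj_on_subset) simp
  ultimately have "finite {q :: rat. q < 0}" by (rule finite_imageD)
  then have "finite {-1 <..< 0 :: rat}" by (rule finite_subset[rotated]) auto
  then show False using infinite_Ioo[of "-1 :: rat" 0] by simp
qed

lemma exists_codes_coordinates:
  "\<exists>R Z. (\<forall>c\<in>snd ` T. \<forall>c'\<in>snd ` T. (c, c') \<in> r2 \<longleftrightarrow> le2 (R c) (R c')) \<and>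
     inj_on R (snd ` T) \<and> strict_mono Z \<and> (\<forall>n. \<forall>c\<in>fiber n. R c < Z n \<and> le2 (Z n) (R c))"
proof -
  obtain \<psi> :: "'c \<Rightarrow> rat" where \<psi>: "\<forall>c\<in>snd ` T. 0 < \<psi> c \<and> \<psi> c < 1"
    "\<forall>c\<in>snd ` T. \<forall>c'\<in>snd ` T. (c, c') \<in> r2 \<longleftrightarrow> \<psi> c \<le> \<psi> c'"
    using countable_chain_embeds_rat_interval[OF chain_X2 snd_T_sub countable_snd_T infinite_snd_T]
    by blast
  define R where "R c = rat_index (\<psi> c)" for c
  have R_le2: "\<forall>c\<in>snd ` T. \<forall>c'\<in>snd ` T. (c, c') \<in> r2 \<longleftrightarrow> le2 (R c) (R c')"
    unfolding R_def le2_rat_index_iff using \<psi>(2) by blast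
  have inj_R: "inj_on R (snd ` T)"
  proof (rule inj_onI)
    fix c c' assume c: "c \<in> snd ` T" "c' \<in> snd ` T" and "R c = R c'"
    then have "(c, c') \<in> r2" "(c', c) \<in> r2"
      using R_le2[rule_format, OF c] R_le2[rule_format, OF c(2,1)] le2_refl by simp_all
    then show "c = c'" by (rule chain_on_antisym[OF chain_X2])
  qed
  obtain Z where Z: "strict_mono Z" "range Z \<subseteq> rat_index ` {q. q < 0}"
    "\<And>n. Max (insert 0 (R ` fiber n)) < Z n"
    using infinite_nat_strict_mono_above[OF infinite_negative_rat_indices,
        of "\<lambda>n. Max (insert 0 (R ` fiber n))"] by blast
  have "R c < Z n \<and> le2 (Z n) (R c)" if c: "c \<in> fiber n" for n c
  proof
    have "R c \<le> Max (insert 0 (R ` fiber n))" using c finite_fiber_n[of n] by simp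
    then show "R c < Z n" using Z(3)[of n] by linarith
    obtain q where q: "q < 0" "Z n = rat_index q" using Z(2) by blast
    have "c \<in> snd ` T" using c unfolding fiber_def by force
    then have "q \<le> \<psi> c" using q(1) \<psi>(1) by force
    then show "le2 (Z n) (R c)" unfolding R_def q(2) le2_rat_index_iff .
  qed
  then show ?thesis using R_le2 inj_R Z(1) by blast
qed

lemma hA_index: "\<exists>n. (\<gamma> n, hA p) \<in> T"
proof -
  obtain t where "t \<in> T" "hA p = snd t" using hA_in[of p] by blast
  then show ?thesis using T_iff[of t] by (auto simp: fiber_def)
qed

lemma exists_large_index_between:
  assumes "p < p'"
  shows "\<exists>r m. p < r \<and> r < p' \<and> N < m \<and> (\<gamma> m, hA r) \<in> T"
proof (rule ccontr)
  assume none: "\<not> ?thesis"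
  have "hA ` {p<..<p'} \<subseteq> (\<Union>m\<le>N. fiber m)"
  proof (rule subsetI)
    fix c assume "c \<in> hA ` {p<..<p'}"
    then obtain r where r: "p < r" "r < p'" "c = hA r" by auto
    obtain m where m: "(\<gamma> m, hA r) \<in> T" using hA_index by blast
    then have "m \<le> N" using none r by (meson not_less)
    then show "c \<in> (\<Union>m\<le>N. fiber m)" using m r(3) unfolding fiber_def by blast
  qed
  moreover have "finite (\<Union>m\<le>N. fiber m)" using finite_fiber_n by simp
  moreover have "infinite (hA ` {p<..<p'})"
    using assms inj_on_subset[OF inj_hA] by (simp add: finite_image_iff)
  ultimately show False by (meson finite_subset)
qed

definition less2 :: "'c \<Rightarrow> 'c \<Rightarrow> bool" where
  "less2 a b \<longleftrightarrow> (a, b) \<in> r2 \<and> a \<noteq> b"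

lemma less2_trans: "less2 a b \<Longrightarrow> less2 b c \<Longrightarrow> less2 a c"
  unfolding less2_def using chain_on_trans[OF chain_X2] chain_on_antisym[OF chain_X2] by blast

lemma not_less2_iff: "a \<in> X2 \<Longrightarrow> b \<in> X2 \<Longrightarrow> \<not> less2 a b \<longleftrightarrow> (b, a) \<in> r2"
  unfolding less2_def using chain_on_total[OF chain_X2] chain_on_refl[OF chain_X2]
    chain_on_antisym[OF chain_X2] by blast

text \<open>The forth construction, run on the points of \<open>T\<close> whose second coordinate lies in the rational
  copy, realises the order \<open>le2\<close> on \<open>nat\<close> inside the second coordinates of \<open>T\<close> while making the
  first coordinates strictly increasing.\<close>

lemma exists_forth_sequence:
  obtains n0 nn cc where "(\<gamma> n0, hA 0) \<in> T" "strict_mono nn" "n0 < nn 0"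
    "\<And>i. (\<gamma> (nn i), cc i) \<in> T" "\<And>i. less2 (hA 0) (cc i)"
    "\<And>i j. le2 i j \<Longrightarrow> i \<noteq> j \<Longrightarrow> less2 (cc i) (cc j)"
proof -
  define E where "E = {e. (\<gamma> (fst e), snd e) \<in> T \<and> snd e \<in> range hA}"
  obtain n0 n1 where n0: "(\<gamma> n0, hA 0) \<in> T" and n1: "(\<gamma> n1, hA 1) \<in> T" using hA_index by blast
  have E_X2: "snd e \<in> X2" if "e \<in> E" for e using that snd_T_sub unfolding E_def by force
  interpret forth_embedding le2 less2 snd E "\<lambda>p c. fst p < fst c" "(n0, hA 0)" "(n1, hA 1)"
  proof unfold_locales
    show "le2 i j \<or> le2 j i" for i j by (rule le2_total)
    show "i = j" if "le2 i j" "le2 j i" for i j using that by (rule le2_antisym)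
    show "le2 i k" if "le2 i j" "le2 j k" for i j k using that by (rule le2_trans)
    show "less2 a c" if "less2 a b" "less2 b c" for a b c using that by (rule less2_trans)
    show "(n0, hA 0) \<in> E" "(n1, hA 1) \<in> E" using n0 n1 by (simp_all add: E_def)
    show "less2 a b \<or> less2 b a" if "a \<in> snd ` E" "b \<in> snd ` E" "a \<noteq> b" for a b
    proof -
      have "a \<in> X2" "b \<in> X2" using that(1,2) E_X2 by blast+
      then show ?thesis using chain_on_total[OF chain_X2, of a b] that(3) unfolding less2_def
          by blast
    qed
    show "less2 (snd (n0, hA 0)) (snd (n1, hA 1))" using hA_less[of 0 1] unfolding less2_def by simp
    show "\<exists>c\<in>E. less2 (snd a) (snd c) \<and> less2 (snd c) (snd b) \<and> fst p < fst c"
      if ab: "a \<in> E" "b \<in> E" "p \<in> E" "less2 (snd a) (snd b)" for a b p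
    proof -
      have "snd a \<in> range hA" "snd b \<in> range hA" using ab(1,2) unfolding E_def by blast+
      then obtain pa pb where pa: "snd a = hA pa" and pb: "snd b = hA pb" by blast
      have "pa < pb" using ab(4) hA_le[of pb pa] chain_on_antisym[OF chain_X2]
        unfolding pa pb less2_def by (meson not_less)
      then obtain r m where r: "pa < r" "r < pb" "fst p < m" "(\<gamma> m, hA r) \<in> T"
        using exists_large_index_between[OF \<open>pa < pb\<close>, of "fst p"] by blast
      then show ?thesis
        using hA_less[OF r(1)] hA_less[OF r(2)] unfolding pa pb less2_def E_def
        by (intro bexI[of _ "(m, hA r)"]) auto
    qed
  qed
  have "strict_mono (\<lambda>i. fst (seq i))" using seq_ok by (simp add: strict_mono_Suc_iff)
  moreover have "(\<gamma> (fst (seq i)), snd (seq i)) \<in> T" for i using seq_in[of i] unfolding E_def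
      by auto
  ultimately show ?thesis
    using that[of n0 "\<lambda>i. fst (seq i)" "\<lambda>i. snd (seq i)"] n0 seq_ok seq_between seq_strict_mono
    by simp
qed

lemma le2_strict_mono_order_embedding:
  assumes cc_X2: "\<And>i. cc i \<in> X2"
    and cc_less: "\<And>i j. le2 i j \<Longrightarrow> i \<noteq> j \<Longrightarrow> less2 (cc i) (cc j)"
  shows "(cc i, cc j) \<in> r2 \<longleftrightarrow> le2 i j"
    and "chain_max r2 (cc i) (cc j) = cc (if le2 i j then j else i)"
proof -
  show le: "(cc i, cc j) \<in> r2 \<longleftrightarrow> le2 i j" for i j
    using cc_less[of i j] cc_less[of j i] le2_total[of i j] chain_on_refl[OF chain_X2 cc_X2]
      not_less2_iff[OF cc_X2 cc_X2] unfolding less2_def by blast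
  show "chain_max r2 (cc i) (cc j) = cc (if le2 i j then j else i)"
    unfolding chain_max_def le by simp
qed

lemma join_embedding_from_codes:
  assumes n0: "(\<gamma> n0, c0) \<in> T" and nn: "strict_mono nn" and n0_less: "n0 < nn 0"
    and in_T: "\<And>i. (\<gamma> (nn i), cc i) \<in> T" and c0_less: "\<And>i. less2 c0 (cc i)"
    and cc_less: "\<And>i j. le2 i j \<Longrightarrow> i \<noteq> j \<Longrightarrow> less2 (cc i) (cc j)"
  shows "\<exists>\<Psi>. join_embedding codes codes_order T (restr (prod_order r1 r2) T) \<Psi>"
proof -
  define nn' where "nn' = case_nat n0 nn"
  define cc' where "cc' = case_nat c0 cc"
  have "cc i \<in> X2" for i using in_T T_sub by blast
  note cc = le2_strict_mono_order_embedding[of cc, OF this cc_less]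
  have "strict_mono nn'"
    unfolding strict_mono_Suc_iff nn'_def using n0_less nn
    by (simp add: strict_mono_Suc_iff split: nat.split)
  then have max_nn': "nn' (max a b) = max (nn' a) (nn' b)" for a b
    using strict_mono_less_eq by (auto simp: max_def)
  have cc'_le: "(cc' a, cc' b) \<in> r2 \<longleftrightarrow> (a, b) \<in> le2_bot" for a b
    using c0_less chain_on_refl[OF chain_X2] n0 T_sub chain_on_antisym[OF chain_X2] cc(1)
    unfolding cc'_def less2_def by (cases a; cases b) fastforce+
  have "cc' a = cc' b \<longleftrightarrow> a = b" for a b
    using cc'_le[of a b] cc'_le[of b a] cc'_le[of b b] chain_on_refl[OF chain_on_le2_bot, of b]
      chain_on_antisym[OF chain_on_le2_bot] by auto
  define \<Psi> where "\<Psi> u = (\<gamma> (nn' (fst u)), cc' (snd u))" for u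
  have "\<Psi> ` codes \<subseteq> T"
  proof (rule image_subsetI)
    fix u assume "u \<in> codes"
    then show "\<Psi> u \<in> T"
    proof (cases rule: codes_cases)
      case (2 i j)
      have "prod_join r1 r2 (\<gamma> (nn i), cc i) (\<gamma> (nn j), cc j) \<in> T"
        using join_closed_T in_T unfolding join_closed_def by blast
      moreover have "max (nn i) (nn j) = nn i" using 2 strict_mono_less_eq[OF nn, of j i] by simp
      ultimately show ?thesis using 2 cc(2) by (simp add: prod_join_\<gamma> \<Psi>_def nn'_def cc'_def)
    qed (simp add: \<Psi>_def nn'_def cc'_def n0)
  qed
  moreover have "inj_on \<Psi> codes"
    using strict_mono_eq[OF \<open>strict_mono nn'\<close>] \<open>\<And>a b. cc' a = cc' b \<longleftrightarrow> a = b\<close>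
    by (intro inj_onI) (auto simp: \<Psi>_def \<gamma>_eq_iff prod_eq_iff)
  moreover have "\<Psi> (prod_join natLeq le2_bot u v) = prod_join r1 r2 (\<Psi> u) (\<Psi> v)" for u v
    using chain_max_order_embedding[of _ UNIV _ le2_bot cc' r2] cc'_le
    by (simp add: \<Psi>_def prod_join_def chain_max_natLeq chain_max_\<gamma> max_nn')
  ultimately have "join_embedding codes codes_order T (restr (prod_order r1 r2) T) \<Psi>"
    by (intro join_embedding_join_closedI[OF chain_on_natLeq chain_on_le2_bot _ join_closed_codes
          chain_X1 chain_X2 T_sub join_closed_T]) auto
  then show ?thesis by blast
qed

lemma equimorphic_codes: "equimorphic T (restr (prod_order r1 r2) T) codes codes_order"
proof -
  obtain R Z where "\<forall>c\<in>snd ` T. \<forall>c'\<in>snd ` T. (c, c') \<in> r2 \<longleftrightarrow> le2 (R c) (R c')"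
    "inj_on R (snd ` T)" "strict_mono Z" "\<forall>n. \<forall>c\<in>fiber n. R c < Z n \<and> le2 (Z n) (R c)"
    using exists_codes_coordinates by blast
  then have "\<exists>\<Phi>. join_embedding T (restr (prod_order r1 r2) T) codes codes_order \<Phi>"
    by (intro join_embedding_into_codes) auto
  moreover obtain n0 nn cc where "(\<gamma> n0, hA 0) \<in> T" "strict_mono nn" "n0 < nn 0"
    "\<And>i. (\<gamma> (nn i), cc i) \<in> T" "\<And>i. less2 (hA 0) (cc i)"
    "\<And>i j. le2 i j \<Longrightarrow> i \<noteq> j \<Longrightarrow> less2 (cc i) (cc j)"
    using exists_forth_sequence by blast
  then have "\<exists>\<Psi>. join_embedding codes codes_order T (restr (prod_order r1 r2) T) \<Psi>"
    by (rule join_embedding_from_codes)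
  ultimately show ?thesis unfolding equimorphic_def by blast
qed

end

context omega_bichain_rat
begin

lemma equimorphic_codes_if_chain_product_rep:
  assumes S: "join_semilattice S s" and rep: "chain_product_rep S s X1 r1 X2 r2 f"
  shows "equimorphic S s codes codes_order"
proof -
  define T where "T = f ` S"
  have c1: "chain_on X1 r1" and c2: "chain_on X2 r2"
    and f: "join_embedding S s (X1 \<times> X2) (prod_order r1 r2) f"
    and ot: "order_type_omega (fst ` T) (restr r1 (fst ` T))"
    and ns: "\<not> order_scattered (snd ` T) (restr r2 (snd ` T))"
    and fib: "\<And>x. x \<in> fst ` T \<Longrightarrow> finite (({x} \<times> snd ` T) \<inter> T)"
    using rep unfolding chain_product_rep_def T_def Let_def by auto
  obtain \<gamma> :: "nat \<Rightarrow> 'b" where \<gamma>: "bij_betw \<gamma> UNIV (fst ` T)"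
    "\<And>m n. (\<gamma> m, \<gamma> n) \<in> restr r1 (fst ` T) \<longleftrightarrow> m \<le> n"
    using ot unfolding order_type_omega_def by blast
  have \<gamma>_in: "\<gamma> m \<in> fst ` T" for m using \<gamma>(1) by (auto simp: bij_betw_def)
  obtain hA :: "rat \<Rightarrow> 'c" where hA: "range hA \<subseteq> snd ` T"
    "\<And>p q. p \<le> q \<longleftrightarrow> (hA p, hA q) \<in> restr r2 (snd ` T)"
    using ns unfolding order_scattered_def by blast
  interpret rep_image X q1 q2 g h X1 r1 X2 r2 T \<gamma> hA
  proof unfold_locales
    show "T \<subseteq> X1 \<times> X2" using f unfolding T_def join_embedding_def by blast
    show "join_closed r1 r2 T" unfolding T_def
        by (rule join_semilattice_image_product(1)[OF S c1 c2 f])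
    show "(\<gamma> m, \<gamma> n) \<in> r1 \<longleftrightarrow> m \<le> n" for m n using \<gamma>(2) \<gamma>_in unfolding restr_def by blast
    show "p \<le> q \<longleftrightarrow> (hA p, hA q) \<in> r2" for p q using hA unfolding restr_def by blast
  qed (use c1 c2 \<gamma>(1) fib hA(1) in auto)
  have "equimorphic S s T (restr (prod_order r1 r2) T)"
    unfolding T_def
    by (rule order_isomorphic_imp_equimorphic[OF join_semilattice_image_product(2)[OF S c1 c2 f]])
  then show ?thesis using equimorphic_codes by (rule equimorphic_trans)
qed

end

lemma LD_witness_imp_omega_bichain_rat:
  fixes X :: "'x set"
  assumes "LD_witness S' s' X q1 q2"
  obtains g h where "omega_bichain_rat X q1 q2 g h"
proof -
  have chains: "chain_on X q1" "chain_on X q2"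
    using assms unfolding LD_witness_def bichain_def by blast+
  obtain g :: "nat \<Rightarrow> 'x" where g: "bij_betw g UNIV X" "\<And>m n. (g m, g n) \<in> q1 \<longleftrightarrow> m \<le> n"
    using assms unfolding LD_witness_def order_type_omega_def by blast
  obtain h :: "rat \<Rightarrow> 'x" where h: "range h \<subseteq> X" "\<And>p q. p \<le> q \<longleftrightarrow> (h p, h q) \<in> q2"
    using assms unfolding LD_witness_def order_scattered_def by blast
  have "omega_bichain_rat X q1 q2 g h"
    by unfold_locales (use chains g h in auto)
  then show ?thesis by (rule that)
qed

theorem proposition8p2:
  fixes S :: "'a set" and s :: "('a \<times> 'a) set"
    and S' :: "'d set" and s' :: "('d \<times> 'd) set"
    and X :: "'x set" and q1 q2 :: "('x \<times> 'x) set"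
    and X1 :: "'b set" and r1 :: "('b \<times> 'b) set"
    and X2 :: "'c set" and r2 :: "('c \<times> 'c) set"
    and f :: "'a \<Rightarrow> 'b \<times> 'c"
  assumes "LD_witness S' s' X q1 q2"
    and "join_semilattice S s"
  shows "(equimorphic S s S' s' \<longrightarrow>
            (\<exists>(Y1::rat set) t1 (Y2::rat set) t2 g. chain_product_rep S s Y1 t1 Y2 t2 g))
       \<and> (chain_product_rep S s X1 r1 X2 r2 f \<longrightarrow> equimorphic S s S' s')"
proof -
  obtain g h where "omega_bichain_rat X q1 q2 g h"
    using LD_witness_imp_omega_bichain_rat[OF assms(1)] .
  then interpret omega_bichain_rat X q1 q2 g h .
  have "order_isomorphic S' s' (compacts X q1 q2) (compacts_order X q1 q2)"
    using assms(1) unfolding LD_witness_def by blast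
  then have S'_codes: "equimorphic S' s' codes codes_order"
    using codes_order_isomorphic_compacts
    by (meson equimorphic_sym equimorphic_trans order_isomorphic_imp_equimorphic)
  show ?thesis
  proof (intro conjI impI)
    assume "equimorphic S s S' s'"
    then obtain e where "chain_product_rep S s UNIV natLeq UNIV le2_bot e"
      using chain_product_rep_if_equimorphic_codes equimorphic_trans S'_codes by blast
    then show "\<exists>(Y1::rat set) t1 (Y2::rat set) t2 g. chain_product_rep S s Y1 t1 Y2 t2 g"
      using chain_product_rep_image[OF _ inj_of_nat inj_of_nat] by blast
  next
    assume "chain_product_rep S s X1 r1 X2 r2 f"
    then have "equimorphic S s codes codes_order"
      by (rule equimorphic_codes_if_chain_product_rep[OF assms(2)])
    then show "equimorphic S s S' s'" using S'_codes equimorphic_sym equimorphic_trans by blast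
  qed
qed

end
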